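(* Let $d\in\{-163,-67,-43,-19,-11,-7,-3,-2,-1\}$ and work in $\mathcal O_{\mathbb{Q}(\sqrt{d})}$. Suppose $z\in\mathcal O_{\mathbb{Q}(\sqrt{d})}\setminus\{0\}$ satisfies $I_n^*(z)=t$ for some $n\in\{1,2\}$ and some $t\in\mathbb{N}\setminus\{1\}$. Then the norm $N(z)=z\bar z$ is even.
   Context: $\mathcal O_{\mathbb{Q}(\sqrt{d})}$ is $\mathbb{Z}[\frac{1+\sqrt d}{2}]$ if $d\equiv 1 \pmod 4$ and $\mathbb{Z}[\sqrt d]$ if $d\equiv 2,3\pmod 4$; for the listed $d$ it is a unique factorization domain. Viewing elements as complex numbers, $|z|=\sqrt{z\bar z}$ and $\arg(z)\in[0,2\pi)$. Define $A(d)$ to be the set of nonzero $z\in\mathcal O_{\mathbb{Q}(\sqrt{d})}$ with $0\le\arg(z)<\pi/2$ if $d=-1$, with $0\le \arg(z)<\pi/3$ if $d=-3$, and with $0\le\arg(z)<\pi$ otherwise. Two elements are relatively prime if they have no nonunit common divisor. For nonzero $x,z$, write $x\Diamond z$ iff $x\in A(d)$, $x\mid z$, and $x$ is relatively prime to $z/x$. For $m\in\mathbb{Z}$ define $\delta_m^*(z)=\sum_{x\Diamond z}|x|^m$ and $I_m^*(z)=\delta_m^*(z)/|z|^m$ for nonzero $z$. *)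

theory Defs
  imports "HOL-Analysis.Analysis"
begin

definition csqrt_int :: "int \<Rightarrow> complex" where
  "csqrt_int d = (if d \<ge> 0 then complex_of_real (sqrt (of_int d))
                  else \<i> * complex_of_real (sqrt (of_int (- d))))"

definition omega :: "int \<Rightarrow> complex" where
  "omega d = (if d mod 4 = 1 then (1 + csqrt_int d) / 2 else csqrt_int d)"

definition OK :: "int \<Rightarrow> complex set" where
  "OK d = {of_int a + of_int b * omega d | a b :: int. True}"

definition arg02pi :: "complex \<Rightarrow> real" where
  "arg02pi z = (if Arg z < 0 then Arg z + 2 * pi else Arg z)"

definition A :: "int \<Rightarrow> complex set" where
  "A d = {z \<in> OK d. z \<noteq> 0 \<and> 0 \<le> arg02pi z \<and>
            arg02pi z < (if d = -1 then pi / 2 else if d = -3 then pi / 3 else pi)}"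

definition dvdO :: "int \<Rightarrow> complex \<Rightarrow> complex \<Rightarrow> bool" where
  "dvdO d x y \<longleftrightarrow> x \<in> OK d \<and> (\<exists>w \<in> OK d. y = x * w)"

definition unitO :: "int \<Rightarrow> complex \<Rightarrow> bool" where
  "unitO d u \<longleftrightarrow> u \<in> OK d \<and> (\<exists>v \<in> OK d. u * v = 1)"

definition rel_primeO :: "int \<Rightarrow> complex \<Rightarrow> complex \<Rightarrow> bool" where
  "rel_primeO d x y \<longleftrightarrow> (\<forall>c \<in> OK d. dvdO d c x \<and> dvdO d c y \<longrightarrow> unitO d c)"

definition diamond :: "int \<Rightarrow> complex \<Rightarrow> complex \<Rightarrow> bool" where
  "diamond d x z \<longleftrightarrow> x \<in> A d \<and> dvdO d x z \<and> rel_primeO d x (z / x)"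

definition delta_star :: "int \<Rightarrow> int \<Rightarrow> complex \<Rightarrow> real" where
  "delta_star d m z = (\<Sum>x \<in> {x. diamond d x z}. cmod x powi m)"

definition I_star :: "int \<Rightarrow> int \<Rightarrow> complex \<Rightarrow> real" where
  "I_star d m z = delta_star d m z / (cmod z powi m)"

end

theory Submission
  imports Defs "HOL-Computational_Algebra.Nth_Powers" "HOL-Computational_Algebra.Squarefree"
begin

section \<open>The ring of integers of an imaginary quadratic field\<close>

definition tr_omega :: "int \<Rightarrow> int" where
  "tr_omega d = (if d mod 4 = 1 then 1 else 0)"

definition nm_omega :: "int \<Rightarrow> int" where
  "nm_omega d = (if d mod 4 = 1 then (1 - d) div 4 else - d)"

definition normO :: "complex \<Rightarrow> nat" where
  "normO x = nat \<lfloor>(cmod x)\<^sup>2\<rfloor>"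

locale imag_quad =
  fixes d :: int
  assumes d_neg: "d < 0"
begin

lemma csqrt_int_d: "csqrt_int d = \<i> * of_real (sqrt (of_int (- d)))"
  using d_neg by (simp add: csqrt_int_def)

lemma Im_omega: "Im (omega d) = (if d mod 4 = 1 then sqrt (- d) / 2 else sqrt (- d))"
  by (simp add: omega_def csqrt_int_d)

lemma Re_omega: "Re (omega d) = (if d mod 4 = 1 then 1 / 2 else 0)"
  by (simp add: omega_def csqrt_int_d)

lemma Im_omega_pos: "Im (omega d) > 0"
  using d_neg by (simp add: Im_omega)

lemma omega_squared: "omega d * omega d = of_int (tr_omega d) * omega d - of_int (nm_omega d)"
proof -
  let ?s = "complex_of_real (sqrt (of_int (- d)))"
  have s: "?s * ?s = - of_int d"
  proof -
    have "sqrt (of_int (- d)) * sqrt (of_int (- d)) = (of_int (- d) :: real)" using d_neg by simp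
    then show ?thesis by (metis of_int_minus of_real_mult of_real_of_int_eq)
  qed
  show ?thesis
  proof (cases "d mod 4 = 1")
    case True
    then have "(4::int) dvd (1 - d)" by presburger
    then have nm: "of_int (nm_omega d) = (1 - of_int d :: complex) / 4"
      using True of_int_div[of 4 "1 - d"] by (simp add: nm_omega_def)
    show ?thesis
      using True s by (simp add: omega_def csqrt_int_d tr_omega_def nm field_simps)
  next
    case False
    then have "omega d * omega d = \<i> * \<i> * (?s * ?s)"
      by (simp add: omega_def csqrt_int_d ac_simps)
    with False s show ?thesis
      by (simp add: tr_omega_def nm_omega_def)
  qed
qed

lemma cnj_omega: "cnj (omega d) = of_int (tr_omega d) - omega d"
  by (simp add: complex_eq_iff Re_omega Im_omega tr_omega_def)

lemma OK_iff: "x \<in> OK d \<longleftrightarrow> (\<exists>a b. x = of_int a + of_int b * omega d)"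
  by (simp add: OK_def)

lemma OK_intro: "of_int a + of_int b * omega d \<in> OK d"
  by (auto simp: OK_iff)

lemma OK_of_int [simp]: "of_int a \<in> OK d"
  using OK_intro[of a 0] by simp

lemma OK_0 [simp]: "0 \<in> OK d"
  using OK_of_int[of 0] by simp

lemma OK_1 [simp]: "1 \<in> OK d"
  using OK_of_int[of 1] by simp

lemma OK_of_nat [simp]: "of_nat a \<in> OK d"
  using OK_of_int[of "int a"] by simp

lemma OK_add [simp, intro]: "x \<in> OK d \<Longrightarrow> y \<in> OK d \<Longrightarrow> x + y \<in> OK d"
proof -
  assume "x \<in> OK d" "y \<in> OK d"
  then obtain a b a' b' where "x = of_int a + of_int b * omega d" "y = of_int a' + of_int b' * omega d"
    by (auto simp: OK_iff)
  then have "x + y = of_int (a + a') + of_int (b + b') * omega d" by (simp add: algebra_simps)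
  then show ?thesis by (metis OK_intro)
qed

lemma OK_uminus [simp, intro]: "x \<in> OK d \<Longrightarrow> - x \<in> OK d"
proof -
  assume "x \<in> OK d"
  then obtain a b where "x = of_int a + of_int b * omega d" by (auto simp: OK_iff)
  then have "- x = of_int (- a) + of_int (- b) * omega d" by (simp add: algebra_simps)
  then show ?thesis by (metis OK_intro)
qed

lemma OK_diff [simp, intro]: "x \<in> OK d \<Longrightarrow> y \<in> OK d \<Longrightarrow> x - y \<in> OK d"
  by (metis OK_add OK_uminus diff_conv_add_uminus)

lemma OK_mult [simp, intro]: "x \<in> OK d \<Longrightarrow> y \<in> OK d \<Longrightarrow> x * y \<in> OK d"
proof -
  assume "x \<in> OK d" "y \<in> OK d"
  then obtain a b a' b' where xy: "x = of_int a + of_int b * omega d" "y = of_int a' + of_int b' * omega d"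
    by (auto simp: OK_iff)
  have "x * y = of_int (a*a') + of_int (a*b' + b*a') * omega d + of_int (b*b') * (omega d * omega d)"
    unfolding xy by (simp add: algebra_simps)
  also have "\<dots> = of_int (a*a' - b*b'*nm_omega d) + of_int (a*b' + b*a' + b*b'*tr_omega d) * omega d"
    unfolding omega_squared by (simp add: algebra_simps)
  finally show ?thesis by (metis OK_intro)
qed

lemma OK_power [simp, intro]: "x \<in> OK d \<Longrightarrow> x ^ k \<in> OK d"
  by (induction k) auto

lemma OK_cnj [simp, intro]: "x \<in> OK d \<Longrightarrow> cnj x \<in> OK d"
proof -
  assume "x \<in> OK d"
  then obtain a b where x: "x = of_int a + of_int b * omega d" by (auto simp: OK_iff)
  have "cnj x = of_int (a + b * tr_omega d) + of_int (- b) * omega d"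
    unfolding x by (simp add: cnj_omega algebra_simps)
  then show ?thesis by (metis OK_intro)
qed

lemma times_cnj_coords:
  "(of_int a + of_int b * omega d) * cnj (of_int a + of_int b * omega d) =
     of_int (a * a + tr_omega d * a * b + nm_omega d * (b * b))"
proof -
  have "(of_int a + of_int b * omega d) * cnj (of_int a + of_int b * omega d) =
      of_int (a*a) + of_int (a*b*tr_omega d) + of_int (b*b) * (of_int (tr_omega d) * omega d - omega d * omega d)"
    by (simp add: cnj_omega algebra_simps)
  then show ?thesis
    unfolding omega_squared by (simp add: algebra_simps)
qed

lemma of_nat_normO:
  assumes "x \<in> OK d"
  shows "of_nat (normO x) = x * cnj x"
proof -
  obtain a b where x: "x = of_int a + of_int b * omega d" using assms by (auto simp: OK_iff)
  define m where "m = a * a + tr_omega d * a * b + nm_omega d * (b * b)"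
  have m: "x * cnj x = of_int m" unfolding x m_def by (rule times_cnj_coords)
  then have "(cmod x)\<^sup>2 = of_int m"
    by (metis complex_norm_square of_real_eq_iff of_real_of_int_eq of_real_power)
  then have "m \<ge> 0" "normO x = nat m"
    by (metis of_int_0_le_iff zero_le_power2, simp add: normO_def)
  then show ?thesis using m by simp
qed

lemma real_normO: "x \<in> OK d \<Longrightarrow> real (normO x) = (cmod x)\<^sup>2"
  by (metis complex_norm_square of_nat_normO of_real_eq_iff of_real_of_nat_eq of_real_power)

lemma normO_eq_0_iff: "x \<in> OK d \<Longrightarrow> normO x = 0 \<longleftrightarrow> x = 0"
  by (metis of_nat_eq_0_iff real_normO norm_eq_zero zero_eq_power2)

lemma normO_mult: "x \<in> OK d \<Longrightarrow> y \<in> OK d \<Longrightarrow> normO (x * y) = normO x * normO y"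
  using real_normO[of x] real_normO[of y] real_normO[of "x*y"]
  by (metis OK_mult norm_mult of_nat_eq_iff of_nat_mult power_mult_distrib)

lemma normO_1 [simp]: "normO 1 = 1"
  by (simp add: normO_def)

lemma normO_power: "x \<in> OK d \<Longrightarrow> normO (x ^ k) = normO x ^ k"
  by (induction k) (simp_all add: normO_mult)

end

context imag_quad
begin

lemma dvdO_OK_left: "dvdO d x y \<Longrightarrow> x \<in> OK d"
  by (simp add: dvdO_def)

lemma dvdO_OK_right: "dvdO d x y \<Longrightarrow> y \<in> OK d"
  by (auto simp: dvdO_def)

lemma dvdO_refl: "x \<in> OK d \<Longrightarrow> dvdO d x x"
  unfolding dvdO_def by (metis OK_1 mult_1_right)

lemma dvdO_0: "x \<in> OK d \<Longrightarrow> dvdO d x 0"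
  unfolding dvdO_def by (metis OK_0 mult_zero_right)

lemma dvdO_0_left_iff: "dvdO d 0 y \<longleftrightarrow> y = 0"
  unfolding dvdO_def by (metis OK_0 mult_zero_left)

lemma dvdO_1: "y \<in> OK d \<Longrightarrow> dvdO d 1 y"
  unfolding dvdO_def by auto

lemma dvdO_trans: "dvdO d x y \<Longrightarrow> dvdO d y z \<Longrightarrow> dvdO d x z"
  unfolding dvdO_def by (metis OK_mult mult.assoc)

lemma dvdO_triv_left: "x \<in> OK d \<Longrightarrow> y \<in> OK d \<Longrightarrow> dvdO d x (x * y)"
  unfolding dvdO_def by blast

lemma dvdO_triv_right: "x \<in> OK d \<Longrightarrow> y \<in> OK d \<Longrightarrow> dvdO d x (y * x)"
  by (metis dvdO_triv_left mult.commute)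

lemma dvdO_mult2: "dvdO d x y \<Longrightarrow> z \<in> OK d \<Longrightarrow> dvdO d x (y * z)"
  unfolding dvdO_def by (metis OK_mult mult.assoc)

lemma dvdO_mult: "dvdO d x y \<Longrightarrow> z \<in> OK d \<Longrightarrow> dvdO d x (z * y)"
  by (metis dvdO_mult2 mult.commute)

lemma dvdO_add: "dvdO d x y \<Longrightarrow> dvdO d x z \<Longrightarrow> dvdO d x (y + z)"
  unfolding dvdO_def by (metis OK_add distrib_left)

lemma dvdO_mult_left_mono: "dvdO d x y \<Longrightarrow> z \<in> OK d \<Longrightarrow> dvdO d (z * x) (z * y)"
  unfolding dvdO_def by (metis OK_mult mult.assoc)

lemma dvdO_divide: "dvdO d x y \<Longrightarrow> x \<noteq> 0 \<Longrightarrow> y / x \<in> OK d \<and> y = x * (y / x)"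
  unfolding dvdO_def by auto

lemma dvdO_iff_divide_OK: "x \<in> OK d \<Longrightarrow> x \<noteq> 0 \<Longrightarrow> dvdO d x y \<longleftrightarrow> y / x \<in> OK d"
  unfolding dvdO_def by (auto intro!: bexI[of _ "y / x"])

lemma dvdO_normO: "dvdO d x y \<Longrightarrow> normO x dvd normO y"
  unfolding dvdO_def by (metis dvd_triv_left normO_mult)

lemma dvdO_normO_le: "dvdO d x y \<Longrightarrow> y \<noteq> 0 \<Longrightarrow> normO x \<le> normO y"
  by (metis dvdO_OK_right dvdO_normO dvd_imp_le normO_eq_0_iff not_gr_zero)

lemma unitO_iff_normO: "unitO d u \<longleftrightarrow> u \<in> OK d \<and> normO u = 1"
proof
  assume "unitO d u"
  then obtain v where "u \<in> OK d" "v \<in> OK d" "u * v = 1" by (auto simp: unitO_def)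
  then have "normO u * normO v = 1" by (metis normO_1 normO_mult)
  then show "u \<in> OK d \<and> normO u = 1" using \<open>u \<in> OK d\<close> by simp
next
  assume "u \<in> OK d \<and> normO u = 1"
  then show "unitO d u"
    using of_nat_normO[of u] by (auto simp: unitO_def)
qed

lemma unitO_OK: "unitO d u \<Longrightarrow> u \<in> OK d"
  by (simp add: unitO_def)

lemma unitO_nonzero: "unitO d u \<Longrightarrow> u \<noteq> 0"
  by (auto simp: unitO_def)

lemma unitO_1: "unitO d 1"
  by (simp add: unitO_iff_normO)

lemma unitO_cmod: "unitO d u \<Longrightarrow> cmod u = 1"
proof -
  assume "unitO d u"
  then have "cmod u = 1 \<or> cmod u = -1"
    using real_normO[of u] by (simp add: unitO_iff_normO power2_eq_1_iff)
  then show ?thesis using norm_ge_zero[of u] by linarith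
qed

lemma unitO_inverse: "unitO d u \<Longrightarrow> 1 / u \<in> OK d \<and> unitO d (1 / u)"
proof -
  assume "unitO d u"
  then obtain v where v: "u \<in> OK d" "v \<in> OK d" "u * v = 1" by (auto simp: unitO_def)
  then have "u \<noteq> 0" by auto
  then have "1 / u = v" using v(3) by (simp add: field_simps)
  then show ?thesis using v by (auto simp: unitO_def mult.commute)
qed

lemma unitO_mult: "unitO d u \<Longrightarrow> unitO d v \<Longrightarrow> unitO d (u * v)"
  by (simp add: unitO_iff_normO normO_mult)

lemma dvdO_unitO: "dvdO d x u \<Longrightarrow> unitO d u \<Longrightarrow> unitO d x"
  using dvdO_normO[of x u] dvdO_OK_left[of x u] by (simp add: unitO_iff_normO)

lemma dvdO_unit_mult_left_iff:
  assumes "unitO d u"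
  shows "dvdO d (u * x) y \<longleftrightarrow> dvdO d x y"
proof -
  have u: "u \<in> OK d" "1 / u \<in> OK d" "u \<noteq> 0"
    using assms unitO_OK unitO_inverse unitO_nonzero by auto
  show ?thesis
  proof
    assume "dvdO d (u * x) y"
    then obtain w where w: "w \<in> OK d" "y = u * x * w" "u * x \<in> OK d" by (auto simp: dvdO_def)
    have "x \<in> OK d" using OK_mult[OF u(2) w(3)] u(3) by simp
    moreover have "y = x * (u * w)" "u * w \<in> OK d" using u w by simp_all
    ultimately show "dvdO d x y" unfolding dvdO_def by blast
  next
    assume "dvdO d x y"
    then obtain w where w: "w \<in> OK d" "y = x * w" "x \<in> OK d" by (auto simp: dvdO_def)
    have "y = u * x * (1 / u * w)" "1 / u * w \<in> OK d" "u * x \<in> OK d"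
      using u w OK_mult[OF u(2) w(1)] by simp_all
    then show "dvdO d (u * x) y" unfolding dvdO_def by blast
  qed
qed

lemma dvdO_unit_mult_right_iff:
  assumes "unitO d u" "y \<in> OK d"
  shows "dvdO d x (u * y) \<longleftrightarrow> dvdO d x y"
proof -
  have u: "u \<in> OK d" "1 / u \<in> OK d" "u \<noteq> 0"
    using assms unitO_OK unitO_inverse unitO_nonzero by auto
  show ?thesis
  proof
    assume "dvdO d x (u * y)"
    from dvdO_mult[OF this u(2)] show "dvdO d x y" using u(3) by simp
  qed (rule dvdO_mult[OF _ u(1)])
qed

lemma dvdO_normO_eq_imp_associated:
  assumes "dvdO d x y" "y \<noteq> 0" "normO x = normO y"
  shows "\<exists>u. unitO d u \<and> y = x * u"
proof -
  obtain w where w: "w \<in> OK d" "y = x * w" "x \<in> OK d" using assms by (auto simp: dvdO_def)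
  have "normO y = normO x * normO w" using w normO_mult by simp
  moreover have "normO y > 0" using assms(2) dvdO_OK_right[OF assms(1)] normO_eq_0_iff by auto
  ultimately have "normO w = 1" using assms(3) by simp
  then show ?thesis using w by (auto simp: unitO_iff_normO)
qed

lemma rel_primeO_sym: "rel_primeO d x y \<longleftrightarrow> rel_primeO d y x"
  unfolding rel_primeO_def by blast

lemma rel_primeO_dvdO_left: "rel_primeO d x y \<Longrightarrow> dvdO d x' x \<Longrightarrow> rel_primeO d x' y"
  unfolding rel_primeO_def by (meson dvdO_trans)

lemma rel_primeO_dvdO_right: "rel_primeO d x y \<Longrightarrow> dvdO d y' y \<Longrightarrow> rel_primeO d x y'"
  unfolding rel_primeO_def by (meson dvdO_trans)

lemma rel_primeO_if_bezout:
  assumes "u \<in> OK d" "v \<in> OK d" "u * x + v * y = 1"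
  shows "rel_primeO d x y"
  unfolding rel_primeO_def
proof (intro ballI impI)
  fix c assume "c \<in> OK d" "dvdO d c x \<and> dvdO d c y"
  then have "dvdO d c (u * x + v * y)" using assms by (meson dvdO_add dvdO_mult)
  then have "dvdO d c 1" using assms(3) by simp
  then show "unitO d c" using dvdO_unitO unitO_1 by blast
qed

lemma rel_primeO_unit_mult_left:
  assumes "unitO d u" "x \<in> OK d"
  shows "rel_primeO d (u * x) y \<longleftrightarrow> rel_primeO d x y"
  unfolding rel_primeO_def using dvdO_unit_mult_right_iff[OF assms] by simp

lemma rel_primeO_unit_mult_right:
  assumes "unitO d u" "y \<in> OK d"
  shows "rel_primeO d x (u * y) \<longleftrightarrow> rel_primeO d x y"
  using rel_primeO_unit_mult_left[OF assms] rel_primeO_sym by metis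

lemma rel_primeO_1_left: "y \<in> OK d \<Longrightarrow> rel_primeO d 1 y"
  using rel_primeO_if_bezout[of 1 0 1 y] by simp

end

locale imag_quad_bezout = imag_quad +
  assumes bezout: "x \<in> OK d \<Longrightarrow> y \<in> OK d \<Longrightarrow>
     \<exists>g\<in>OK d. dvdO d g x \<and> dvdO d g y \<and> (\<exists>u\<in>OK d. \<exists>v\<in>OK d. g = u * x + v * y)"
begin

lemma bezout_if_rel_primeO:
  assumes "x \<in> OK d" "y \<in> OK d" "rel_primeO d x y"
  shows "\<exists>u\<in>OK d. \<exists>v\<in>OK d. u * x + v * y = 1"
proof -
  obtain g u v where g: "dvdO d g x" "dvdO d g y" "u \<in> OK d" "v \<in> OK d" "g = u * x + v * y"
    using bezout[OF assms(1,2)] by blast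
  then have "unitO d g" using assms(3) dvdO_OK_left by (auto simp: rel_primeO_def)
  then have ig: "1 / g \<in> OK d" "g \<noteq> 0" using unitO_inverse unitO_nonzero by auto
  have "(1 / g * u) * x + (1 / g * v) * y = 1 / g * (u * x + v * y)"
    by (simp add: algebra_simps)
  then have "(1 / g * u) * x + (1 / g * v) * y = 1"
    using g(5) ig(2) by simp
  then show ?thesis using ig g by (metis OK_mult)
qed

lemma rel_primeO_dvdO_mult:
  assumes "rel_primeO d a b" "dvdO d a (b * c)" "b \<in> OK d" "c \<in> OK d"
  shows "dvdO d a c"
proof -
  have a: "a \<in> OK d" using assms(2) dvdO_OK_left by blast
  obtain u v where uv: "u \<in> OK d" "v \<in> OK d" "u * a + v * b = 1"
    using bezout_if_rel_primeO[OF a assms(3,1)] by blast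
  have "c = (u * a + v * b) * c" using uv(3) by simp
  then have "c = (u * c) * a + v * (b * c)" by (simp add: algebra_simps)
  moreover have "dvdO d a ((u * c) * a)" using a uv assms by (simp add: dvdO_triv_right)
  moreover have "dvdO d a (v * (b * c))" using assms(2) uv by (simp add: dvdO_mult)
  ultimately show ?thesis by (metis dvdO_add)
qed

lemma rel_primeO_mult_left:
  assumes "rel_primeO d a c" "rel_primeO d b c" "a \<in> OK d" "b \<in> OK d" "c \<in> OK d"
  shows "rel_primeO d (a * b) c"
proof -
  obtain u v where uv: "u \<in> OK d" "v \<in> OK d" "u * a + v * c = 1"
    using bezout_if_rel_primeO[OF assms(3,5,1)] by blast
  obtain u' v' where uv': "u' \<in> OK d" "v' \<in> OK d" "u' * b + v' * c = 1"
    using bezout_if_rel_primeO[OF assms(4,5,2)] by blast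
  have "(u * u') * (a * b) + (u * a * v' + v * (u' * b) + v * v' * c) * c =
      (u * a + v * c) * (u' * b + v' * c)"
    by (simp add: algebra_simps)
  also have "\<dots> = 1" using uv(3) uv'(3) by simp
  finally show ?thesis
    using uv uv' assms(3-5)
    by (intro rel_primeO_if_bezout[of "u * u'" "u * a * v' + v * (u' * b) + v * v' * c"]) simp_all
qed

lemma rel_primeO_power_left:
  assumes "rel_primeO d a c" "a \<in> OK d" "c \<in> OK d"
  shows "rel_primeO d (a ^ k) c"
proof (induction k)
  case 0
  then show ?case using rel_primeO_1_left assms by simp
next
  case (Suc k)
  then show ?case using rel_primeO_mult_left[OF assms(1) Suc] assms by simp
qed

definition primeO :: "complex \<Rightarrow> bool" where
  "primeO p \<longleftrightarrow> p \<in> OK d \<and> p \<noteq> 0 \<and> \<not> unitO d p \<and>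
     (\<forall>a\<in>OK d. \<forall>b\<in>OK d. dvdO d p (a * b) \<longrightarrow> dvdO d p a \<or> dvdO d p b)"

lemma primeO_OK: "primeO p \<Longrightarrow> p \<in> OK d"
  by (simp add: primeO_def)

lemma primeO_nonzero: "primeO p \<Longrightarrow> p \<noteq> 0"
  by (simp add: primeO_def)

lemma primeO_normO_ge_2: "primeO p \<Longrightarrow> normO p \<ge> 2"
  using normO_eq_0_iff[of p] unitO_iff_normO[of p] by (auto simp: primeO_def)

lemma primeO_if_irreducible:
  assumes p: "p \<in> OK d" "p \<noteq> 0" "\<not> unitO d p"
    and irr: "\<And>c. dvdO d c p \<Longrightarrow> unitO d c \<or> normO c = normO p"
  shows "primeO p"
proof -
  have "rel_primeO d p a" if "\<not> dvdO d p a" for a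
    unfolding rel_primeO_def
  proof (intro ballI impI)
    fix c assume c: "c \<in> OK d" "dvdO d c p \<and> dvdO d c a"
    show "unitO d c"
    proof (rule ccontr)
      assume "\<not> unitO d c"
      then obtain u where "unitO d u" "p = c * u"
        using irr c p dvdO_normO_eq_imp_associated by blast
      then show False
        using c that dvdO_unit_mult_left_iff by (metis mult.commute)
    qed
  qed
  then have "dvdO d p a \<or> dvdO d p b" if "a \<in> OK d" "b \<in> OK d" "dvdO d p (a * b)" for a b
    using rel_primeO_dvdO_mult that by blast
  then show ?thesis using p unfolding primeO_def by blast
qed

lemma ex_primeO_dvdO:
  assumes "z \<in> OK d" "z \<noteq> 0" "\<not> unitO d z"
  shows "\<exists>p. primeO p \<and> dvdO d p z"
  using assms
proof (induction "normO z" arbitrary: z rule: less_induct)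
  case less
  show ?case
  proof (cases "\<exists>c. dvdO d c z \<and> \<not> unitO d c \<and> normO c \<noteq> normO z")
    case True
    then obtain c where c: "dvdO d c z" "\<not> unitO d c" "normO c \<noteq> normO z" by blast
    have "normO c < normO z" using dvdO_normO_le[OF c(1) less(3)] c(3) by simp
    moreover have "c \<in> OK d" "c \<noteq> 0" using c(1) less(3) dvdO_OK_left dvdO_0_left_iff by blast+
    ultimately obtain p where "primeO p" "dvdO d p c" using less(1) c(2) by blast
    then show ?thesis using c(1) dvdO_trans by blast
  next
    case False
    then have "primeO z" using primeO_if_irreducible less by blast
    then show ?thesis using dvdO_refl less(2) by blast
  qed
qed

lemma rel_primeO_if_not_dvdO:
  assumes "primeO p" "a \<in> OK d" "\<not> dvdO d p a"
  shows "rel_primeO d p a"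
  unfolding rel_primeO_def
proof (intro ballI impI)
  fix c assume c: "c \<in> OK d" "dvdO d c p \<and> dvdO d c a"
  obtain w where w: "w \<in> OK d" "p = c * w" using c by (auto simp: dvdO_def)
  have "dvdO d p c \<or> dvdO d p w"
    using assms(1) c w dvdO_refl by (auto simp: primeO_def)
  then show "unitO d c"
  proof
    assume "dvdO d p c"
    then show ?thesis using c assms(3) dvdO_trans by blast
  next
    assume "dvdO d p w"
    then obtain k where k: "k \<in> OK d" "w = p * k" by (auto simp: dvdO_def)
    then have "p * (c * k) = p * 1" using w by (simp add: algebra_simps)
    then have "c * k = 1" using primeO_nonzero[OF assms(1)] by simp
    then show ?thesis using c k by (auto simp: unitO_def)
  qed
qed

lemma primeO_power_decompose:
  assumes "primeO p" "z \<in> OK d" "z \<noteq> 0"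
  obtains e w where "w \<in> OK d" "z = p ^ e * w" "\<not> dvdO d p w"
  using assms(2,3)
proof (induction "normO z" arbitrary: z thesis rule: less_induct)
  case less
  show ?case
  proof (cases "dvdO d p z")
    case False
    then show ?thesis using less(2)[of z 0] less(3) by simp
  next
    case True
    then obtain y where y: "y \<in> OK d" "z = p * y" by (auto simp: dvdO_def)
    then have "y \<noteq> 0" using less by auto
    have "normO z = normO p * normO y" using y primeO_OK[OF assms(1)] normO_mult by simp
    moreover have "normO y > 0" using \<open>y \<noteq> 0\<close> y normO_eq_0_iff by auto
    ultimately have "normO y < normO z" using primeO_normO_ge_2[OF assms(1)] by simp
    then obtain e w where "w \<in> OK d" "y = p ^ e * w" "\<not> dvdO d p w"
      using less(1) y(1) \<open>y \<noteq> 0\<close> by metis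
    then show ?thesis using less(2)[of w "Suc e"] y by (simp add: mult.assoc)
  qed
qed

end

context imag_quad
begin

lemma finite_OK_normO_le: "finite {x \<in> OK d. normO x \<le> N}"
proof -
  define R where "R = sqrt (real N)"
  define B where "B = nat \<lceil>R / Im (omega d)\<rceil>"
  define C where "C = nat \<lceil>R + real B\<rceil>"
  have "{x \<in> OK d. normO x \<le> N} \<subseteq>
      (\<lambda>(a, b). of_int a + of_int b * omega d) ` ({- int C..int C} \<times> {- int B..int B})"
  proof safe
    fix x assume x: "x \<in> OK d" "normO x \<le> N"
    then obtain a b where ab: "x = of_int a + of_int b * omega d" by (auto simp: OK_iff)
    have "cmod x \<le> R"
      using x real_normO[OF x(1)] unfolding R_def by (metis norm_ge_zero of_nat_le_iff real_le_rsqrt)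
    then have "\<bar>Im x\<bar> \<le> R" "\<bar>Re x\<bar> \<le> R"
      using abs_Im_le_cmod[of x] abs_Re_le_cmod[of x] by linarith+
    moreover have "Im x = of_int b * Im (omega d)" "Re x = of_int a + of_int b * Re (omega d)"
      using ab by simp_all
    ultimately have b: "\<bar>of_int b\<bar> \<le> R / Im (omega d)" and "\<bar>of_int a + of_int b * Re (omega d)\<bar> \<le> R"
      using Im_omega_pos by (simp_all add: abs_mult pos_le_divide_eq)
    moreover have "\<bar>of_int b * Re (omega d)\<bar> \<le> \<bar>of_int b\<bar>"
      by (simp add: Re_omega abs_mult)
    ultimately have "\<bar>of_int a\<bar> \<le> R + \<bar>of_int b\<bar>" by linarith
    moreover have "\<bar>b\<bar> \<le> int B" using b unfolding B_def by linarith
    ultimately have "\<bar>a\<bar> \<le> int C" unfolding C_def by linarith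
    with \<open>\<bar>b\<bar> \<le> int B\<close> show "x \<in> (\<lambda>(a, b). of_int a + of_int b * omega d) `
        ({- int C..int C} \<times> {- int B..int B})"
      using ab by (auto intro!: image_eqI[of _ _ "(a, b)"])
  qed
  then show ?thesis by (rule finite_subset) auto
qed

end

locale imag_quad_normal = imag_quad_bezout +
  assumes A_representative: "x \<in> OK d \<Longrightarrow> x \<noteq> 0 \<Longrightarrow> \<exists>u. unitO d u \<and> u * x \<in> A d"
    and A_unit_unique: "x \<in> A d \<Longrightarrow> unitO d u \<Longrightarrow> u * x \<in> A d \<Longrightarrow> u = 1"
begin

lemma A_OK: "x \<in> A d \<Longrightarrow> x \<in> OK d"
  by (simp add: A_def)

lemma A_nonzero: "x \<in> A d \<Longrightarrow> x \<noteq> 0"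
  by (simp add: A_def)

lemma one_in_A: "1 \<in> A d"
  unfolding A_def arg02pi_def by (auto simp: Arg_1)

lemma A_associated_eq: "y \<in> A d \<Longrightarrow> unitO d u \<Longrightarrow> u * y \<in> A d \<Longrightarrow> u * y = y"
  using A_unit_unique by simp

definition repA :: "complex \<Rightarrow> complex" where
  "repA x = (SOME y. y \<in> A d \<and> (\<exists>u. unitO d u \<and> y = u * x))"

lemma repA:
  assumes "x \<in> OK d" "x \<noteq> 0"
  obtains u where "unitO d u" "repA x = u * x" "repA x \<in> A d"
proof -
  obtain u where "unitO d u" "u * x \<in> A d" using A_representative[OF assms] by blast
  then have "\<exists>y. y \<in> A d \<and> (\<exists>u. unitO d u \<and> y = u * x)" by blast
  then show ?thesis using that unfolding repA_def by (metis (mono_tags, lifting) someI_ex)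
qed

lemma cmod_repA: "x \<in> OK d \<Longrightarrow> x \<noteq> 0 \<Longrightarrow> cmod (repA x) = cmod x"
  by (metis repA unitO_cmod mult_1 norm_mult)

lemma repA_eq:
  assumes "x \<in> OK d" "x \<noteq> 0" "y \<in> A d" "unitO d u" "y = u * x"
  shows "repA x = y"
proof -
  obtain v where v: "unitO d v" "repA x = v * x" "repA x \<in> A d" using repA[OF assms(1,2)] .
  have "u \<noteq> 0" using unitO_nonzero assms(4) by blast
  then have "repA x = (v * (1 / u)) * y" using v(2) assms(5) by simp
  moreover have "unitO d (v * (1 / u))" using unitO_mult v unitO_inverse assms(4) by blast
  ultimately show ?thesis using A_associated_eq[OF assms(3)] v(3) by metis
qed

definition udivs :: "complex \<Rightarrow> complex set" where
  "udivs z = {x. diamond d x z}"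

lemma udivs_iff: "x \<in> udivs z \<longleftrightarrow> x \<in> A d \<and> dvdO d x z \<and> rel_primeO d x (z / x)"
  by (simp add: udivs_def diamond_def)

lemma udivs_memD:
  assumes "x \<in> udivs z"
  shows "x \<in> OK d" "x \<noteq> 0" "dvdO d x z" "z / x \<in> OK d" "z = x * (z / x)" "rel_primeO d x (z / x)"
  using assms A_OK A_nonzero dvdO_divide by (auto simp: udivs_iff)

lemma finite_udivs: "z \<in> OK d \<Longrightarrow> z \<noteq> 0 \<Longrightarrow> finite (udivs z)"
  by (rule finite_subset[OF _ finite_OK_normO_le[of "normO z"]]) (auto dest: udivs_memD dvdO_normO_le)

lemma udivs_unit: "unitO d z \<Longrightarrow> udivs z = {1}"
  using unitO_OK one_in_A dvdO_1 rel_primeO_1_left dvdO_unitO A_associated_eq[of 1] 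
  by (auto simp: udivs_iff)

lemma repA_in_udivs:
  assumes "x \<in> OK d" "x \<noteq> 0" "dvdO d x z" "rel_primeO d x (z / x)"
  shows "repA x \<in> udivs z"
proof -
  obtain u where u: "unitO d u" "repA x = u * x" "repA x \<in> A d" using repA[OF assms(1,2)] .
  have "z / x \<in> OK d" "unitO d (1 / u)"
    using assms dvdO_divide unitO_inverse u(1) by auto
  then have "rel_primeO d (u * x) (1 / u * (z / x)) \<longleftrightarrow> rel_primeO d (u * x) (z / x)"
    using rel_primeO_unit_mult_right by blast
  then have "rel_primeO d (u * x) (1 / u * (z / x))"
    using assms(4) rel_primeO_unit_mult_left[OF u(1) assms(1)] by blast
  moreover have "z / (u * x) = 1 / u * (z / x)" by simp
  ultimately have "rel_primeO d (u * x) (z / (u * x))" by (simp only:)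
  then show ?thesis
    using u assms(3) dvdO_unit_mult_left_iff by (simp add: udivs_iff)
qed

lemma udivs_mult_coprime:
  assumes "rel_primeO d q w" "q \<in> OK d" "y \<in> udivs w"
  shows "y \<in> udivs (q * w)"
proof -
  note y = udivs_memD[OF assms(3)]
  have "rel_primeO d y q"
    using assms(1) y(3) rel_primeO_sym rel_primeO_dvdO_left by blast
  then have "rel_primeO d y (q * (w / y))"
    using y assms(2) rel_primeO_sym rel_primeO_mult_left by blast
  moreover have "q * w / y = q * (w / y)" by simp
  ultimately have "rel_primeO d y (q * w / y)" by (simp only:)
  moreover have "dvdO d y (q * w)" using y(3) assms(2) dvdO_mult by blast
  ultimately show ?thesis using assms(3) unfolding udivs_iff by blast
qed

lemma repA_mult_udivs_mult_coprime:
  assumes "rel_primeO d q w" "q \<in> OK d" "q \<noteq> 0" "y \<in> udivs w"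
  shows "repA (q * y) \<in> udivs (q * w)"
proof (rule repA_in_udivs)
  note y = udivs_memD[OF assms(4)]
  show "q * y \<in> OK d" "q * y \<noteq> 0" using assms(2,3) y by auto
  show "dvdO d (q * y) (q * w)" using dvdO_mult_left_mono[OF y(3) assms(2)] .
  have "rel_primeO d q (w / y)"
    using assms(1) y dvdO_triv_right rel_primeO_dvdO_right by metis
  then have "rel_primeO d (q * y) (w / y)"
    using rel_primeO_mult_left y assms(2) by blast
  then show "rel_primeO d (q * y) (q * w / (q * y))" using assms(3) y(2) by simp
qed

lemma udivs_mult_coprime_divisor:
  assumes "rel_primeO d x q" "q \<in> OK d" "w \<in> OK d" "x \<in> udivs (q * w)"
  shows "x \<in> udivs w"
proof -
  note x = udivs_memD[OF assms(4)]
  have "dvdO d x w" using rel_primeO_dvdO_mult assms x(3) by blast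
  then have wx: "w / x \<in> OK d" using dvdO_divide x(2) by blast
  have "q * w / x = q * (w / x)" by simp
  then have "dvdO d (w / x) (q * w / x)" using dvdO_triv_right[OF wx assms(2)] by (simp only:)
  then have "rel_primeO d x (w / x)" using x(6) rel_primeO_dvdO_right by blast
  then show ?thesis using \<open>dvdO d x w\<close> assms(4) unfolding udivs_iff by blast
qed

lemma udivs_mult_divisor_multiple:
  assumes "q \<in> OK d" "q \<noteq> 0" "w \<in> OK d" "x \<in> udivs (q * w)" "dvdO d q x"
  shows "repA (x / q) \<in> udivs w" "repA (q * repA (x / q)) = x"
proof -
  note x = udivs_memD[OF assms(4)]
  define y where "y = x / q"
  have y: "y \<in> OK d" "x = q * y" "y \<noteq> 0"
    using dvdO_divide[OF assms(5,2)] x(2) unfolding y_def by auto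
  have r: "q * w / x = w / y" using y assms(2) by simp
  have "dvdO d y w"
    using x(5) y assms(2) r x(4) dvdO_triv_left by (metis mult.assoc mult_left_cancel)
  moreover have "rel_primeO d y (w / y)"
    using x(6) r y dvdO_triv_right assms(1) rel_primeO_dvdO_left by metis
  ultimately show "repA (x / q) \<in> udivs w"
    using repA_in_udivs y unfolding y_def by blast
  obtain u where u: "unitO d u" "repA y = u * y" "repA y \<in> A d" using repA[OF y(1,3)] .
  have "u \<noteq> 0" using unitO_nonzero u(1) by blast
  then have "x = (1 / u) * (q * repA y)" using u(2) y(2) by simp
  moreover have "q * repA y \<in> OK d" "q * repA y \<noteq> 0"
    using assms(1,2) A_OK[OF u(3)] A_nonzero[OF u(3)] by auto
  moreover have "x \<in> A d" using assms(4) by (simp add: udivs_iff)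
  ultimately have "repA (q * repA y) = x"
    using repA_eq unitO_inverse[OF u(1)] by blast
  then show "repA (q * repA (x / q)) = x" unfolding y_def .
qed

lemma udivs_prime_power_mult:
  assumes p: "primeO p" and e: "e \<ge> 1" and w: "w \<in> OK d" "\<not> dvdO d p w"
  shows "udivs (p ^ e * w) = udivs w \<union> (\<lambda>y. repA (p ^ e * y)) ` udivs w"
    and "udivs w \<inter> (\<lambda>y. repA (p ^ e * y)) ` udivs w = {}"
    and "inj_on (\<lambda>y. repA (p ^ e * y)) (udivs w)"
proof -
  define q where "q = p ^ e"
  have pO: "p \<in> OK d" "p \<noteq> 0" using p primeO_OK primeO_nonzero by auto
  then have qO: "q \<in> OK d" "q \<noteq> 0" by (auto simp: q_def)
  have pq: "dvdO d p q"
    using e pO unfolding q_def by (metis dvdO_triv_left le_add_diff_inverse OK_power power_add power_one_right)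
  have rel_q: "rel_primeO d q a" if "a \<in> OK d" "\<not> dvdO d p a" for a
    unfolding q_def using rel_primeO_power_left[OF rel_primeO_if_not_dvdO[OF p that] pO(1) that(1)] .
  have not_p: "\<not> dvdO d p y" if "y \<in> udivs w" for y
    using that w(2) dvdO_trans by (auto simp: udivs_iff)
  have p_image: "dvdO d p (repA (q * y))" if "y \<in> udivs w" for y
  proof -
    note y = udivs_memD[OF that]
    obtain u where "unitO d u" "repA (q * y) = u * (q * y)" using repA[of "q * y"] qO y by auto
    then show ?thesis
      using pq y(1) unitO_OK dvdO_mult dvdO_mult2 by (metis mult.assoc)
  qed
  have "x \<in> udivs w \<union> (\<lambda>y. repA (q * y)) ` udivs w" if x: "x \<in> udivs (q * w)" for x
  proof (cases "dvdO d p x")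
    case False
    then have "rel_primeO d x q" using rel_q udivs_memD[OF x] rel_primeO_sym by blast
    then show ?thesis using udivs_mult_coprime_divisor qO w x by blast
  next
    case True
    note x' = udivs_memD[OF x]
    have "\<not> dvdO d p (q * w / x)"
      using x'(6) True p unfolding rel_primeO_def by (auto simp: primeO_def)
    then have "rel_primeO d q (q * w / x)" using rel_q x'(4) by blast
    moreover have "dvdO d q ((q * w / x) * x)"
      using x'(5) qO(1) w(1) dvdO_triv_left by (metis mult.commute)
    ultimately have "dvdO d q x" using rel_primeO_dvdO_mult x' by blast
    then show ?thesis
      using udivs_mult_divisor_multiple[OF qO w(1) x] by (metis UnI2 image_eqI)
  qed
  then show "udivs (p ^ e * w) = udivs w \<union> (\<lambda>y. repA (p ^ e * y)) ` udivs w"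
    using udivs_mult_coprime[OF rel_q[OF w] qO(1)] repA_mult_udivs_mult_coprime[OF rel_q[OF w] qO]
    unfolding q_def by blast
  show "udivs w \<inter> (\<lambda>y. repA (p ^ e * y)) ` udivs w = {}"
    using not_p p_image unfolding q_def by blast
  show "inj_on (\<lambda>y. repA (p ^ e * y)) (udivs w)"
  proof (rule inj_onI)
    fix y1 y2 assume y: "y1 \<in> udivs w" "y2 \<in> udivs w" "repA (p ^ e * y1) = repA (p ^ e * y2)"
    note y1 = udivs_memD[OF y(1)] and y2 = udivs_memD[OF y(2)]
    obtain u1 where u1: "unitO d u1" "repA (q * y1) = u1 * (q * y1)"
      using repA[of "q * y1"] qO y1 by auto
    obtain u2 where u2: "unitO d u2" "repA (q * y2) = u2 * (q * y2)"
      using repA[of "q * y2"] qO y2 by auto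
    have "u1 \<noteq> 0" using unitO_nonzero u1 by blast
    with u1 u2 y(3) pO(2) have "(u2 * (1 / u1)) * y2 = y1" by (simp add: q_def field_simps)
    moreover have "unitO d (u2 * (1 / u1))" using unitO_mult unitO_inverse u1 u2 by blast
    ultimately show "y1 = y2"
      using A_associated_eq y unfolding udivs_iff by metis
  qed
qed

lemma I_star_unit: "unitO d z \<Longrightarrow> I_star d n z = 1"
  by (simp add: I_star_def delta_star_def udivs_unit unitO_cmod flip: udivs_def)

lemma I_star_prime_power_mult:
  assumes p: "primeO p" and e: "e \<ge> 1" and w: "w \<in> OK d" "w \<noteq> 0" "\<not> dvdO d p w"
  shows "I_star d n (p ^ e * w) = (1 + inverse (cmod (p ^ e) powi n)) * I_star d n w"
proof -
  let ?q = "p ^ e" and ?f = "\<lambda>y. repA (p ^ e * y)"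
  note S = udivs_prime_power_mult[OF p e w(1,3)]
  have qO: "?q \<in> OK d" "?q \<noteq> 0" using p primeO_OK primeO_nonzero by auto
  have fin: "finite (udivs w)" using finite_udivs w by blast
  have cmod_f: "cmod (?f y) = cmod ?q * cmod y" if "y \<in> udivs w" for y
    using cmod_repA qO udivs_memD[OF that] by (simp add: norm_mult)
  have "delta_star d n (?q * w) = (\<Sum>x\<in>udivs w. cmod x powi n) + (\<Sum>x\<in>?f ` udivs w. cmod x powi n)"
    unfolding delta_star_def udivs_def[symmetric] S(1) using S(2) fin by (intro sum.union_disjoint) auto
  also have "(\<Sum>x\<in>?f ` udivs w. cmod x powi n) = (\<Sum>y\<in>udivs w. cmod (?f y) powi n)"
    using sum.reindex[OF S(3)] by simp
  also have "\<dots> = (\<Sum>y\<in>udivs w. cmod ?q powi n * cmod y powi n)"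
    by (rule sum.cong) (simp_all add: cmod_f power_int_mult_distrib)
  finally have "delta_star d n (?q * w) = (1 + cmod ?q powi n) * delta_star d n w"
    unfolding delta_star_def udivs_def[symmetric] by (simp add: sum.distrib sum_distrib_left algebra_simps)
  moreover have "cmod ?q powi n \<noteq> 0" "cmod w powi n \<noteq> 0" using qO w by auto
  ultimately show ?thesis
    unfolding I_star_def by (simp add: norm_mult power_int_mult_distrib field_simps)
qed

lemma I_star_eq_prod_list:
  assumes "z \<in> OK d" "z \<noteq> 0"
  obtains ms where "prod_list ms = normO z" "\<forall>m\<in>set ms. m \<ge> 2"
    "I_star d n z = prod_list (map (\<lambda>m. 1 + inverse (sqrt (real m) powi n)) ms)"
  using assms
proof (induction "normO z" arbitrary: z thesis rule: less_induct)
  case less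
  show ?case
  proof (cases "unitO d z")
    case True
    then show ?thesis using less(2)[of "[]"] I_star_unit by (simp add: unitO_iff_normO)
  next
    case False
    obtain p where p: "primeO p" "dvdO d p z" using ex_primeO_dvdO[OF less(3,4) False] by blast
    obtain e w where ew: "w \<in> OK d" "z = p ^ e * w" "\<not> dvdO d p w"
      using primeO_power_decompose[OF p(1) less(3,4)] by blast
    have e: "e \<ge> 1" using ew p by (cases e) auto
    have w0: "w \<noteq> 0" using ew less(4) by auto
    have qO: "p ^ e \<in> OK d" using p(1) primeO_OK by auto
    have "normO p \<ge> 2" by (rule primeO_normO_ge_2[OF p(1)])
    then have nq: "normO (p ^ e) \<ge> 2"
      using self_le_power[of "normO p" e] e normO_power[OF primeO_OK[OF p(1)]] by simp
    have nz: "normO z = normO (p ^ e) * normO w" using ew qO normO_mult by simp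
    moreover have "normO w > 0" using w0 ew normO_eq_0_iff by auto
    ultimately have "normO w < normO z" using nq by simp
    then obtain ms where ms: "prod_list ms = normO w" "\<forall>m\<in>set ms. m \<ge> 2"
      "I_star d n w = prod_list (map (\<lambda>m. 1 + inverse (sqrt (real m) powi n)) ms)"
      using less(1)[OF \<open>normO w < normO z\<close> _ ew(1) w0] by blast
    have "cmod (p ^ e) = sqrt (real (normO (p ^ e)))" using real_normO[OF qO] by simp
    then have "I_star d n z = prod_list (map (\<lambda>m. 1 + inverse (sqrt (real m) powi n)) (normO (p ^ e) # ms))"
      using I_star_prime_power_mult[OF p(1) e ew(1) w0 ew(3)] ew(2) ms(3) by simp
    then show ?thesis using less(2)[of "normO (p ^ e) # ms"] nz ms(1,2) nq by simp
  qed
qed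

end

section \<open>Products of the form \<open>\<Prod>(1 + 1/c)\<close> with odd \<open>c\<close>\<close>

lemma prod_list_one_plus_inverse:
  "(\<forall>c\<in>set cs. c > 0) \<Longrightarrow>
   prod_list (map (\<lambda>c. 1 + 1 / real c) cs) = real (prod_list (map Suc cs)) / real (prod_list cs)"
  by (induction cs) (auto simp: field_simps)

lemma two_power_dvd_prod_list_Suc: "(\<forall>c\<in>set cs. odd c) \<Longrightarrow> 2 ^ length cs dvd prod_list (map Suc cs)"
proof (induction cs)
  case (Cons c cs)
  then have "2 * 2 ^ length cs dvd Suc c * prod_list (map Suc cs)"
    by (intro mult_dvd_mono) auto
  then show ?case by simp
qed simp

lemma prod_list_Suc_less:
  "cs \<noteq> [] \<Longrightarrow> (\<forall>c\<in>set cs. c \<ge> 2) \<Longrightarrow> prod_list (map Suc cs) < 2 ^ length cs * prod_list cs"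
proof (induction cs)
  case (Cons c cs)
  have "Suc c < 2 * c" using Cons by simp
  moreover have "prod_list (map Suc cs) \<le> 2 ^ length cs * prod_list cs"
    using Cons by (cases "cs = []") auto
  moreover have "0 < prod_list (map Suc cs)" by (induction cs) auto
  ultimately have "Suc c * prod_list (map Suc cs) < (2 * c) * (2 ^ length cs * prod_list cs)"
    by (intro mult_less_le_imp_less) auto
  then show ?case by (simp add: algebra_simps)
qed simp

text \<open>The numerator \<open>\<Prod>(c + 1)\<close> is divisible by \<open>2\<^sup>k\<close> while the denominator is odd, so an
  integral quotient is a multiple of \<open>2\<^sup>k\<close>; but each factor is less than 2.\<close>

lemma prod_list_one_plus_inverse_odd_neq_nat:
  assumes "cs \<noteq> []" "\<forall>c\<in>set cs. odd c \<and> c \<ge> 2"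
  shows "prod_list (map (\<lambda>c. 1 + 1 / real c) cs) \<noteq> real t"
proof
  assume t: "prod_list (map (\<lambda>c. 1 + 1 / real c) cs) = real t"
  let ?P = "prod_list cs" and ?Q = "prod_list (map Suc cs)" and ?k = "length cs"
  have pos: "\<forall>c\<in>set cs. c > 0" using assms(2) by auto
  then have "?P > 0" by (induction cs) auto
  then have tPQ: "t * ?P = ?Q"
    using t prod_list_one_plus_inverse[OF pos] by (simp add: field_simps flip: of_nat_mult)
  have "odd ?P" using assms(2) by (induction cs) auto
  then have "coprime (2 ^ ?k) ?P" by simp
  moreover have "2 ^ ?k dvd t * ?P" using two_power_dvd_prod_list_Suc assms(2) tPQ by simp
  ultimately have "2 ^ ?k dvd t" using coprime_dvd_mult_left_iff by blast
  moreover have "?Q > 0" by (induction cs) auto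
  then have "t > 0" using tPQ by (metis gr0I mult_0)
  ultimately have "2 ^ ?k \<le> t" by (simp add: dvd_imp_le)
  moreover have "t * ?P < 2 ^ ?k * ?P" using prod_list_Suc_less assms tPQ by simp
  ultimately show False by simp
qed

section \<open>Adjoining square roots of primes to the rationals\<close>

definition real_subfield :: "real set \<Rightarrow> bool" where
  "real_subfield F \<longleftrightarrow> \<rat> \<subseteq> F \<and>
     (\<forall>x\<in>F. \<forall>y\<in>F. x + y \<in> F \<and> x * y \<in> F \<and> - x \<in> F \<and> (x \<noteq> 0 \<longrightarrow> inverse x \<in> F))"

definition adjoin_sqrt :: "real set \<Rightarrow> nat \<Rightarrow> real set" where
  "adjoin_sqrt F p = {a + b * sqrt (real p) | a b. a \<in> F \<and> b \<in> F}"

context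
  fixes F :: "real set"
  assumes F: "real_subfield F"
begin

lemma subfield_Rats: "x \<in> \<rat> \<Longrightarrow> x \<in> F"
  using F by (auto simp: real_subfield_def)

lemma subfield_add: "x \<in> F \<Longrightarrow> y \<in> F \<Longrightarrow> x + y \<in> F"
  and subfield_mult: "x \<in> F \<Longrightarrow> y \<in> F \<Longrightarrow> x * y \<in> F"
  and subfield_uminus: "x \<in> F \<Longrightarrow> - x \<in> F"
  and subfield_inverse: "x \<in> F \<Longrightarrow> x \<noteq> 0 \<Longrightarrow> inverse x \<in> F"
  using F by (auto simp: real_subfield_def)

lemma subfield_diff: "x \<in> F \<Longrightarrow> y \<in> F \<Longrightarrow> x - y \<in> F"
  using subfield_add subfield_uminus by (metis diff_conv_add_uminus)

lemma subfield_divide: "x \<in> F \<Longrightarrow> y \<in> F \<Longrightarrow> x / y \<in> F"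
  unfolding divide_inverse by (cases "y = 0") (auto intro: subfield_mult subfield_inverse subfield_Rats)

lemma subfield_of_nat: "real n \<in> F"
  by (simp add: subfield_Rats)

lemma subfield_power: "x \<in> F \<Longrightarrow> x ^ k \<in> F"
  by (induction k) (auto intro: subfield_mult subfield_Rats)

lemma subfield_abs: "x \<in> F \<Longrightarrow> \<bar>x\<bar> \<in> F"
  by (simp add: abs_if subfield_uminus)

lemma adjoin_sqrtI: "a \<in> F \<Longrightarrow> b \<in> F \<Longrightarrow> a + b * sqrt (real p) \<in> adjoin_sqrt F p"
  unfolding adjoin_sqrt_def by blast

lemma subset_adjoin_sqrt: "x \<in> F \<Longrightarrow> x \<in> adjoin_sqrt F p"
  using adjoin_sqrtI[of x 0] subfield_Rats by simp

lemma sqrt_in_adjoin_sqrt: "sqrt (real p) \<in> adjoin_sqrt F p"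
  using adjoin_sqrtI[of 0 1] subfield_Rats by simp

lemma real_subfield_adjoin_sqrt:
  assumes p: "sqrt (real p) \<notin> F"
  shows "real_subfield (adjoin_sqrt F p)"
  unfolding real_subfield_def
proof (intro conjI subsetI ballI)
  let ?s = "sqrt (real p)"
  show "x \<in> adjoin_sqrt F p" if "x \<in> \<rat>" for x
    using that subfield_Rats subset_adjoin_sqrt by blast
  fix x y assume "x \<in> adjoin_sqrt F p" "y \<in> adjoin_sqrt F p"
  then obtain a b c e where ab: "a \<in> F" "b \<in> F" "x = a + b * ?s"
    and ce: "c \<in> F" "e \<in> F" "y = c + e * ?s"
    unfolding adjoin_sqrt_def by blast
  have "x + y = (a + c) + (b + e) * ?s" using ab(3) ce(3) by (simp add: algebra_simps)
  moreover have "a + c \<in> F" "b + e \<in> F" using ab ce by (auto intro: subfield_add)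
  ultimately show "x + y \<in> adjoin_sqrt F p" by (simp only: adjoin_sqrtI)
  have "x * y = (a * c + real p * (b * e)) + (a * e + b * c) * ?s"
    using ab(3) ce(3) by (simp add: algebra_simps)
  moreover have "a * c + real p * (b * e) \<in> F" "a * e + b * c \<in> F"
    using ab ce by (auto intro: subfield_add subfield_mult subfield_of_nat)
  ultimately show "x * y \<in> adjoin_sqrt F p" by (simp only: adjoin_sqrtI)
  have "- x = (- a) + (- b) * ?s" using ab(3) by simp
  moreover have "- a \<in> F" "- b \<in> F" using ab by (auto intro: subfield_uminus)
  ultimately show "- x \<in> adjoin_sqrt F p" by (simp only: adjoin_sqrtI)
  show "x \<noteq> 0 \<longrightarrow> inverse x \<in> adjoin_sqrt F p"
  proof
    assume "x \<noteq> 0"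
    define D where "D = a * a - real p * (b * b)"
    have "D \<noteq> 0"
    proof
      assume "D = 0"
      show False
      proof (cases "b = 0")
        case True
        then show False using \<open>D = 0\<close> \<open>x \<noteq> 0\<close> ab(3) by (simp add: D_def)
      next
        case False
        then have "(a / b) * (a / b) = real p" using \<open>D = 0\<close> by (simp add: D_def field_simps)
        then have "?s = \<bar>a / b\<bar>" by (metis real_sqrt_abs2)
        then show False using p ab subfield_abs subfield_divide by metis
      qed
    qed
    have "x * (a - b * ?s) = D" unfolding ab(3) D_def by (simp add: algebra_simps)
    then have "inverse x = (a - b * ?s) / D"
      using \<open>D \<noteq> 0\<close> \<open>x \<noteq> 0\<close> by (simp add: field_simps)
    then have "inverse x = a / D + (- b / D) * ?s" by (simp add: diff_divide_distrib)
    then show "inverse x \<in> adjoin_sqrt F p"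
      using ab \<open>D \<noteq> 0\<close> unfolding D_def
      by (metis adjoin_sqrtI subfield_diff subfield_divide subfield_mult subfield_of_nat subfield_uminus)
  qed
qed

text \<open>If \<open>\<surd>m = a + b\<surd>p\<close>, squaring shows \<open>\<surd>p \<in> F\<close> unless \<open>a b = 0\<close>; \<open>b = 0\<close> gives \<open>\<surd>m \<in> F\<close>
  and \<open>a = 0\<close> gives \<open>\<surd>(m p) = b p \<in> F\<close>.\<close>

lemma sqrt_notin_adjoin_sqrt:
  assumes "sqrt (real p) \<notin> F" "sqrt (real m) \<notin> F" "sqrt (real (m * p)) \<notin> F"
  shows "sqrt (real m) \<notin> adjoin_sqrt F p"
proof
  let ?s = "sqrt (real p)"
  assume "sqrt (real m) \<in> adjoin_sqrt F p"
  then obtain a b where ab: "a \<in> F" "b \<in> F" "sqrt (real m) = a + b * ?s"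
    unfolding adjoin_sqrt_def by blast
  have "real m = sqrt (real m) * sqrt (real m)" by simp
  then have "real m = (a + b * ?s) * (a + b * ?s)" by (simp only: ab(3))
  then have mq: "real m = (a * a + real p * (b * b)) + 2 * a * b * ?s"
    by (simp add: algebra_simps)
  consider "b = 0" | "a = 0" | "a \<noteq> 0" "b \<noteq> 0" by blast
  then show False
  proof cases
    case 1
    then show False using ab assms(2) by simp
  next
    case 2
    then have "sqrt (real (m * p)) = b * real p" using ab(3) by (simp add: real_sqrt_mult)
    then show False using ab(2) assms(3) subfield_mult subfield_of_nat by metis
  next
    case 3
    then have "?s = (real m - (a * a + real p * (b * b))) / (2 * a * b)"
      using mq by (simp add: field_simps)
    moreover have "real m - (a * a + real p * (b * b)) \<in> F" "2 * a * b \<in> F"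
      using ab by (auto intro!: subfield_diff subfield_add subfield_mult subfield_of_nat
          simp: subfield_Rats)
    ultimately show False using assms(1) subfield_divide by metis
  qed
qed

end

lemma real_subfield_Rats: "real_subfield \<rat>"
  by (auto simp: real_subfield_def)

lemma sqrt_notin_Rats_if_squarefree:
  assumes "squarefree m" "m > 1"
  shows "sqrt (real m) \<notin> \<rat>"
proof
  assume "sqrt (real m) \<in> \<rat>"
  then obtain a b :: nat where ab: "b \<noteq> 0" "\<bar>sqrt (real m)\<bar> = real a / real b"
    by (rule Rats_abs_nat_div_natE)
  then have "real m * real b ^ 2 = real a ^ 2"
    by (metis abs_of_nonneg real_sqrt_ge_zero of_nat_0_le_iff real_sqrt_pow2 power_divide
        nonzero_divide_eq_eq of_nat_eq_0_iff power_not_zero)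
  then have "is_nth_power 2 (m * b ^ 2)" by (metis is_nth_power_nth_power of_nat_eq_iff of_nat_mult of_nat_power)
  then have "is_nth_power 2 m" using ab(1) by (simp add: is_nth_power_mult_cancel_right)
  then obtain c where "m = c ^ 2" by (rule is_nth_powerE)
  then show False using assms squarefreeD[of m c] by auto
qed

fun sqrt_tower :: "nat list \<Rightarrow> real set" where
  "sqrt_tower [] = \<rat>"
| "sqrt_tower (p # ps) = adjoin_sqrt (sqrt_tower ps) p"

lemma sqrt_tower_subfield_sqrt_notin:
  assumes "distinct ps" "\<forall>p\<in>set ps. prime p"
  shows "real_subfield (sqrt_tower ps) \<and>
    (\<forall>m. squarefree m \<longrightarrow> m > 1 \<longrightarrow> (\<forall>p\<in>set ps. \<not> p dvd m) \<longrightarrow> sqrt (real m) \<notin> sqrt_tower ps)"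
  using assms
proof (induction ps)
  case Nil
  then show ?case using real_subfield_Rats sqrt_notin_Rats_if_squarefree by simp
next
  case (Cons p ps)
  have p: "prime p" "p \<notin> set ps" "\<forall>q\<in>set ps. prime q" "distinct ps"
    using Cons.prems by auto
  have F: "real_subfield (sqrt_tower ps)" using Cons.IH p by blast
  have notin: "sqrt (real m) \<notin> sqrt_tower ps"
    if "squarefree m" "m > 1" "\<forall>q\<in>set ps. \<not> q dvd m" for m
    using Cons.IH p that by blast
  have sp: "sqrt (real p) \<notin> sqrt_tower ps"
    using notin[of p] p squarefree_prime prime_gt_1_nat primes_dvd_imp_eq by metis
  have "sqrt (real m) \<notin> sqrt_tower (p # ps)"
    if m: "squarefree m" "m > 1" "\<forall>q\<in>set (p # ps). \<not> q dvd m" for m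
  proof -
    have "\<forall>q\<in>set ps. \<not> q dvd m * p"
      using m p by (metis list.set_intros(2) prime_dvd_mult_iff primes_dvd_imp_eq)
    moreover have "\<not> p dvd m" using m(3) by simp
    then have "coprime p m" using p(1) prime_imp_coprime by blast
    then have "squarefree (m * p)"
      using m p squarefree_mult_coprime squarefree_prime coprime_commute by blast
    ultimately have "sqrt (real (m * p)) \<notin> sqrt_tower ps"
      using notin m p prime_gt_1_nat by (metis less_1_mult)
    then show ?thesis using sqrt_notin_adjoin_sqrt[OF F sp] notin m by simp
  qed
  then show ?case using real_subfield_adjoin_sqrt[OF F sp] by simp
qed

lemma real_subfield_sqrt_tower:
  "distinct ps \<Longrightarrow> \<forall>p\<in>set ps. prime p \<Longrightarrow> real_subfield (sqrt_tower ps)"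
  using sqrt_tower_subfield_sqrt_notin by blast

lemma sqrt_prime_notin_sqrt_tower:
  assumes "distinct ps" "\<forall>p\<in>set ps. prime p" "prime q" "q \<notin> set ps"
  shows "sqrt (real q) \<notin> sqrt_tower ps"
  using sqrt_tower_subfield_sqrt_notin[OF assms(1,2)] assms(2-4)
  by (metis squarefree_prime prime_gt_1_nat primes_dvd_imp_eq)

lemma sqrt_prime_in_sqrt_tower:
  assumes "distinct ps" "\<forall>p\<in>set ps. prime p" "p \<in> set ps"
  shows "sqrt (real p) \<in> sqrt_tower ps"
  using assms
proof (induction ps)
  case (Cons q ps)
  then have F: "real_subfield (sqrt_tower ps)" using real_subfield_sqrt_tower by simp
  show ?case using Cons subset_adjoin_sqrt[OF F] sqrt_in_adjoin_sqrt[OF F] by auto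
qed simp

lemma sqrt_in_sqrt_tower:
  assumes "distinct ps" "\<forall>p\<in>set ps. prime p" "r > 0" "\<forall>p. prime p \<longrightarrow> p dvd r \<longrightarrow> p \<in> set ps"
  shows "sqrt (real r) \<in> sqrt_tower ps"
  using assms(3,4)
proof (induction r rule: less_induct)
  case (less r)
  note F = real_subfield_sqrt_tower[OF assms(1,2)]
  show ?case
  proof (cases "r = 1")
    case True
    then show ?thesis using subfield_Rats[OF F] by simp
  next
    case False
    then obtain p r' where p: "prime p" "r = p * r'" using prime_factor_nat by (metis dvdE)
    then have "r' > 0" "r' < r" using less(2) prime_gt_1_nat[OF p(1)] by auto
    then have "sqrt (real r') \<in> sqrt_tower ps" using less p by auto
    moreover have "sqrt (real p) \<in> sqrt_tower ps"
      using less(3) p assms(1,2) sqrt_prime_in_sqrt_tower by auto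
    ultimately show ?thesis using p(2) subfield_mult[OF F] by (simp add: real_sqrt_mult)
  qed
qed

definition sqrt_form_nonneg :: "real set \<Rightarrow> nat \<Rightarrow> real \<Rightarrow> bool" where
  "sqrt_form_nonneg F q x \<longleftrightarrow> (\<exists>a b. a \<in> F \<and> b \<in> F \<and> a > 0 \<and> b \<ge> 0 \<and> x = a + b * sqrt (real q))"

definition sqrt_form_pos :: "real set \<Rightarrow> nat \<Rightarrow> real \<Rightarrow> bool" where
  "sqrt_form_pos F q x \<longleftrightarrow> (\<exists>a b. a \<in> F \<and> b \<in> F \<and> a > 0 \<and> b > 0 \<and> x = a + b * sqrt (real q))"

context
  fixes F :: "real set"
  assumes F: "real_subfield F"
begin

lemma sqrt_form_times:
  "(a + b * sqrt (real q)) * (c + e * sqrt (real q)) =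
     (a * c + real q * (b * e)) + (a * e + b * c) * sqrt (real q)"
proof -
  have "sqrt (real q) * sqrt (real q) = real q" by simp
  then show ?thesis by (simp add: algebra_simps)
qed

lemma sqrt_form_nonneg_mult:
  assumes "sqrt_form_nonneg F q x" "sqrt_form_nonneg F q y"
  shows "sqrt_form_nonneg F q (x * y)"
proof -
  obtain a b c e where ab: "a \<in> F" "b \<in> F" "a > 0" "b \<ge> 0" "x = a + b * sqrt (real q)"
    and ce: "c \<in> F" "e \<in> F" "c > 0" "e \<ge> 0" "y = c + e * sqrt (real q)"
    using assms unfolding sqrt_form_nonneg_def by blast
  have "a * c + real q * (b * e) \<in> F" "a * e + b * c \<in> F"
    using ab ce by (auto intro!: subfield_add[OF F] subfield_mult[OF F] subfield_of_nat[OF F])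
  moreover have "a * c + real q * (b * e) > 0" "a * e + b * c \<ge> 0"
    using ab ce by (auto intro: add_pos_nonneg)
  ultimately show ?thesis
    unfolding sqrt_form_nonneg_def ab(5) ce(5) sqrt_form_times by blast
qed

lemma sqrt_form_pos_mult:
  assumes "sqrt_form_pos F q x" "sqrt_form_nonneg F q y"
  shows "sqrt_form_pos F q (x * y)"
proof -
  obtain a b c e where ab: "a \<in> F" "b \<in> F" "a > 0" "b > 0" "x = a + b * sqrt (real q)"
    and ce: "c \<in> F" "e \<in> F" "c > 0" "e \<ge> 0" "y = c + e * sqrt (real q)"
    using assms unfolding sqrt_form_nonneg_def sqrt_form_pos_def by blast
  have "a * c + real q * (b * e) \<in> F" "a * e + b * c \<in> F"
    using ab ce by (auto intro!: subfield_add[OF F] subfield_mult[OF F] subfield_of_nat[OF F])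
  moreover have "a * c + real q * (b * e) > 0" "a * e + b * c > 0"
    using ab ce by (auto intro: add_pos_nonneg add_nonneg_pos)
  ultimately show ?thesis
    unfolding sqrt_form_pos_def ab(5) ce(5) sqrt_form_times by blast
qed

lemma sqrt_form_nonneg_if_pos: "sqrt_form_pos F q x \<Longrightarrow> sqrt_form_nonneg F q x"
  unfolding sqrt_form_pos_def sqrt_form_nonneg_def by force

lemma sqrt_form_pos_prod_list:
  assumes "\<forall>x\<in>set xs. sqrt_form_nonneg F q x" "\<exists>x\<in>set xs. sqrt_form_pos F q x"
  shows "sqrt_form_pos F q (prod_list xs)"
  using assms
proof (induction xs)
  case (Cons x xs)
  have "sqrt_form_nonneg F q 1"
    using subfield_Rats[OF F] unfolding sqrt_form_nonneg_def
    by (metis Rats_0 Rats_1 add.right_neutral mult_zero_left order_refl zero_less_one)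
  then have "sqrt_form_nonneg F q (prod_list xs)"
    using Cons.prems(1) sqrt_form_nonneg_mult by (induction xs) auto
  show ?case
  proof (cases "sqrt_form_pos F q x")
    case True
    then show ?thesis using sqrt_form_pos_mult[OF True \<open>sqrt_form_nonneg F q (prod_list xs)\<close>] by simp
  next
    case False
    then have xs: "sqrt_form_pos F q (prod_list xs)" using Cons by auto
    show ?thesis using sqrt_form_pos_mult[OF xs, of x] Cons.prems(1) by (simp add: mult.commute)
  qed
qed simp

lemma sqrt_notin_if_sqrt_form_pos:
  assumes "sqrt_form_pos F q x" "x \<in> F"
  shows "sqrt (real q) \<in> F"
proof -
  obtain a b where ab: "a \<in> F" "b \<in> F" "b > 0" "x = a + b * sqrt (real q)"
    using assms(1) unfolding sqrt_form_pos_def by blast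
  then have "sqrt (real q) = (x - a) / b" by simp
  then show ?thesis using ab assms(2) subfield_diff[OF F] subfield_divide[OF F] by metis
qed

end

text \<open>Pick a prime \<open>q\<close> occurring to an odd power in some \<open>m\<close> and let \<open>F\<close> be generated by the
  square roots of all other primes dividing the product. Every factor \<open>1 + 1/\<surd>m\<close> lies in
  \<open>F\<close> or has the form \<open>1 + b\<surd>q\<close> with \<open>b > 0\<close>, so a rational product would put \<open>\<surd>q\<close> into \<open>F\<close>.\<close>

lemma is_square_if_prod_list_one_plus_inverse_sqrt_rat:
  assumes pos: "\<forall>m\<in>set ms. m > 0"
    and rat: "prod_list (map (\<lambda>m. 1 + 1 / sqrt (real m)) ms) \<in> \<rat>"
  shows "\<forall>m\<in>set ms. is_square m"
proof (rule ccontr)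
  assume "\<not> (\<forall>m\<in>set ms. is_square m)"
  then obtain m0 q where m0: "m0 \<in> set ms" "prime q" "odd (multiplicity q m0)"
    using is_nth_power_conv_multiplicity_nat[of 2] by auto
  define M where "M = prod_list ms"
  have "M > 0" unfolding M_def using pos by (induction ms) auto
  define ps where "ps = sorted_list_of_set {p. prime p \<and> p dvd M \<and> p \<noteq> q}"
  have "finite {p. prime p \<and> p dvd M \<and> p \<noteq> q}"
    by (rule finite_subset[of _ "{..M}"]) (auto simp: \<open>M > 0\<close> dvd_imp_le)
  then have ps: "set ps = {p. prime p \<and> p dvd M \<and> p \<noteq> q}" "distinct ps" "\<forall>p\<in>set ps. prime p"
    by (auto simp: ps_def)
  note F = real_subfield_sqrt_tower[OF ps(2,3)]
  have q_pos: "real q > 0" using prime_gt_0_nat[OF m0(2)] by simp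
  have one: "1 \<in> sqrt_tower ps" using subfield_Rats[OF F] by simp
  have factor: "sqrt_form_nonneg (sqrt_tower ps) q (1 + 1 / sqrt (real m)) \<and>
      (odd (multiplicity q m) \<longrightarrow> sqrt_form_pos (sqrt_tower ps) q (1 + 1 / sqrt (real m)))"
    if m: "m \<in> set ms" for m
  proof -
    obtain r where r: "m = q ^ multiplicity q m * r" "\<not> q dvd r"
      using multiplicity_decompose'[of m q] pos m m0(2) by (metis not_prime_unit not_gr0)
    have "r > 0" using r pos m by (cases "r = 0") auto
    moreover have "p \<in> set ps" if "prime p" "p dvd r" for p
    proof -
      have "p dvd M" using that r(1) prod_list_dvd[OF m] dvd_trans unfolding M_def by (metis dvd_mult)
      then show ?thesis using that r(2) ps(1) by auto
    qed
    ultimately have sr: "sqrt (real r) \<in> sqrt_tower ps" "sqrt (real r) > 0"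
      using sqrt_in_sqrt_tower[OF ps(2,3)] by auto
    obtain h where "multiplicity q m = 2 * h \<or> multiplicity q m = 2 * h + 1"
      by (metis oddE evenE)
    then consider "multiplicity q m = 2 * h" | "multiplicity q m = 2 * h + 1" by blast
    then show ?thesis
    proof cases
      case 1
      then have "sqrt (real m) = real q ^ h * sqrt (real r)"
        using r(1) by (simp add: real_sqrt_mult power_mult real_sqrt_power)
      moreover have "1 + 1 / (real q ^ h * sqrt (real r)) \<in> sqrt_tower ps"
        using sr one by (auto intro!: subfield_add[OF F] subfield_divide[OF F] subfield_mult[OF F]
            subfield_power[OF F] subfield_of_nat[OF F])
      moreover have "1 + 1 / (real q ^ h * sqrt (real r)) > 0" using sr q_pos by (simp add: add_pos_nonneg)
      ultimately show ?thesis
        using 1 subfield_Rats[OF F, of 0] unfolding sqrt_form_nonneg_def by fastforce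
    next
      case 2
      then have "sqrt (real m) = real q ^ h * sqrt (real q) * sqrt (real r)"
        using r(1) by (simp add: real_sqrt_mult power_mult real_sqrt_power power_add)
      then have "1 / sqrt (real m) = 1 / (real q ^ (h + 1) * sqrt (real r)) * sqrt (real q)"
        using q_pos sr by (simp add: field_simps power_add)
      moreover have "1 / (real q ^ (h + 1) * sqrt (real r)) \<in> sqrt_tower ps"
        using sr one by (auto intro!: subfield_divide[OF F] subfield_mult[OF F]
            subfield_power[OF F] subfield_of_nat[OF F])
      moreover have "1 / (real q ^ (h + 1) * sqrt (real r)) > 0" using sr q_pos by simp
      ultimately have "sqrt_form_pos (sqrt_tower ps) q (1 + 1 / sqrt (real m))"
        using subfield_Rats[OF F, of 1] unfolding sqrt_form_pos_def by fastforce
      then show ?thesis using sqrt_form_nonneg_if_pos[OF F] by blast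
    qed
  qed
  have "sqrt_form_pos (sqrt_tower ps) q (prod_list (map (\<lambda>m. 1 + 1 / sqrt (real m)) ms))"
    using factor m0 by (intro sqrt_form_pos_prod_list[OF F]) auto
  then have "sqrt (real q) \<in> sqrt_tower ps"
    using sqrt_notin_if_sqrt_form_pos[OF F] rat subfield_Rats[OF F] by blast
  moreover have "q \<notin> set ps" using ps(1) by simp
  ultimately show False using sqrt_prime_notin_sqrt_tower[OF ps(2,3) m0(2)] by blast
qed

lemma prod_list_one_plus_inverse_powi_odd_neq_nat:
  assumes "ms \<noteq> []" "\<forall>m\<in>set ms. odd m \<and> m \<ge> 2" "n \<in> {1, 2::int}"
  shows "prod_list (map (\<lambda>m. 1 + inverse (sqrt (real m) powi n)) ms) \<noteq> real t"
proof
  assume t: "prod_list (map (\<lambda>m. 1 + inverse (sqrt (real m) powi n)) ms) = real t"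
  consider "n = 2" | "n = 1" using assms(3) by blast
  then show False
  proof cases
    case 1
    then have "prod_list (map (\<lambda>m. 1 + 1 / real m) ms) = real t"
      using t by (simp add: power2_eq_square divide_inverse)
    then show False using prod_list_one_plus_inverse_odd_neq_nat[OF assms(1,2)] by blast
  next
    case 2
    then have t1: "prod_list (map (\<lambda>m. 1 + 1 / sqrt (real m)) ms) = real t"
      using t by (simp add: divide_inverse)
    have "\<forall>m\<in>set ms. m > 0" using assms(2) by auto
    then have "\<forall>m\<in>set ms. is_square m"
      by (rule is_square_if_prod_list_one_plus_inverse_sqrt_rat) (unfold t1, rule Rats_of_nat)
    then have "\<forall>m\<in>set ms. \<exists>c. c ^ 2 = m" by (auto simp: is_nth_power_def)
    then obtain root where root: "\<And>m. m \<in> set ms \<Longrightarrow> root m ^ 2 = m" by metis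
    have "sqrt (real m) = real (root m)" if "m \<in> set ms" for m
    proof -
      have "sqrt (real m) = sqrt (real (root m) ^ 2)" using root[OF that] by (metis of_nat_power)
      then show ?thesis by simp
    qed
    then have "map (\<lambda>m. 1 + 1 / sqrt (real m)) ms = map (\<lambda>c. 1 + 1 / real c) (map root ms)"
      by simp
    then have "prod_list (map (\<lambda>c. 1 + 1 / real c) (map root ms)) = real t"
      using t1 by metis
    moreover have "\<forall>c\<in>set (map root ms). odd c \<and> c \<ge> 2"
    proof
      fix c assume "c \<in> set (map root ms)"
      then obtain m where m: "m \<in> set ms" "c = root m" by auto
      then have m': "c ^ 2 = m" "odd m" "m \<ge> 2" using root assms(2) by auto
      then have "odd c" by auto
      moreover have "c \<ge> 2"
      proof (rule ccontr)
        assume "\<not> c \<ge> 2"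
        then have "c = 0 \<or> c = 1" by auto
        then show False using m' by auto
      qed
      ultimately show "odd c \<and> c \<ge> 2" by simp
    qed
    ultimately show False using prod_list_one_plus_inverse_odd_neq_nat assms(1) by blast
  qed
qed

section \<open>Units and the fundamental sector \<open>A d\<close>\<close>

lemma cis_add_2pi: "cis (t + 2 * pi) = cis t"
  by (metis cis_2pi cis_mult mult_1_right)

lemma arg02pi_range: "0 \<le> arg02pi x \<and> arg02pi x < 2 * pi"
  using Arg_bounded[of x] by (auto simp: arg02pi_def)

lemma arg02pi_rcis:
  assumes "r > 0" "0 \<le> phi" "phi < 2 * pi"
  shows "arg02pi (rcis r phi) = phi"
proof (cases "phi \<le> pi")
  case True
  then show ?thesis using assms Arg_rcis[of phi r] by (simp add: arg02pi_def)
next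
  case False
  have "rcis r phi = rcis r (phi - 2 * pi)"
    unfolding rcis_def using cis_add_2pi[of "phi - 2 * pi"] by simp
  moreover have "Arg (rcis r (phi - 2 * pi)) = phi - 2 * pi"
    using assms False Arg_rcis[of "phi - 2 * pi" r] by simp
  ultimately show ?thesis using False assms by (simp add: arg02pi_def)
qed

lemma cis_mult_arg02pi:
  assumes "x \<noteq> 0" "0 \<le> a" "a < 2 * pi"
  shows "arg02pi (cis a * x) =
    (if arg02pi x + a < 2 * pi then arg02pi x + a else arg02pi x + a - 2 * pi)"
proof -
  let ?t = "arg02pi x"
  have "rcis (cmod x) ?t = x"
    using rcis_cmod_Arg[of x] cis_add_2pi[of "Arg x"] by (auto simp: arg02pi_def rcis_def)
  then have e1: "cis a * x = rcis (cmod x) (?t + a)"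
    unfolding rcis_def by (metis cis_mult mult.left_commute add.commute)
  have e2: "rcis (cmod x) (?t + a) = rcis (cmod x) (?t + a - 2 * pi)"
    unfolding rcis_def using cis_add_2pi[of "?t + a - 2 * pi"] by simp
  show ?thesis
  proof (cases "?t + a < 2 * pi")
    case True
    then show ?thesis using e1 arg02pi_rcis[of "cmod x" "?t + a"] arg02pi_range[of x] assms by simp
  next
    case False
    then show ?thesis
      using e1 e2 arg02pi_rcis[of "cmod x" "?t + a - 2 * pi"] arg02pi_range[of x] assms by simp
  qed
qed

lemma ex_cis_mult_arg02pi_less:
  assumes "w \<ge> 1" "real w * \<beta> = 2 * pi" "x \<noteq> 0"
  shows "\<exists>k<w. arg02pi (cis (real k * \<beta>) * x) < \<beta>"
proof -
  let ?t = "arg02pi x"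
  have \<beta>: "\<beta> > 0" using assms(1,2) by (metis mult_pos_pos of_nat_0_less_iff pi_gt_zero
        zero_less_mult_pos zero_less_numeral le_less_trans less_one not_less_iff_gr_or_eq)
  define j where "j = nat \<lfloor>?t / \<beta>\<rfloor>"
  have t: "0 \<le> ?t" "?t < 2 * pi" using arg02pi_range by auto
  then have j: "real j = of_int \<lfloor>?t / \<beta>\<rfloor>" using \<beta> by (simp add: j_def)
  have "real j \<le> ?t / \<beta>" "?t / \<beta> < real j + 1" unfolding j by linarith+
  then have jle: "real j * \<beta> \<le> ?t" and jlt: "?t < real j * \<beta> + \<beta>"
    using \<beta> by (simp_all add: field_simps)
  have "j < w"
    using jle t assms(2) \<beta> by (metis mult_less_cancel_right_pos of_nat_less_iff le_less_trans)
  show ?thesis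
  proof (cases "j = 0")
    case True
    then show ?thesis using jlt assms(1) by (intro exI[of _ 0]) auto
  next
    case False
    define a where "a = real (w - j) * \<beta>"
    have a: "a = 2 * pi - real j * \<beta>"
      unfolding a_def using \<open>j < w\<close> assms(2) by (simp add: of_nat_diff algebra_simps)
    moreover have "real j * \<beta> > 0" using False \<beta> by simp
    ultimately have "0 \<le> a" "a < 2 * pi" "\<not> ?t + a < 2 * pi" using jle t by linarith+
    then have "arg02pi (cis a * x) = ?t - real j * \<beta>"
      using cis_mult_arg02pi[OF assms(3)] a by simp
    then show ?thesis using jlt False \<open>j < w\<close> unfolding a_def by (intro exI[of _ "w - j"]) auto
  qed
qed

lemma cis_mult_arg02pi_less_unique:
  assumes "real w * \<beta> = 2 * pi" "x \<noteq> 0" "arg02pi x < \<beta>" "k < w"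
    and "arg02pi (cis (real k * \<beta>) * x) < \<beta>"
  shows "k = 0"
proof (rule ccontr)
  assume "k \<noteq> 0"
  have \<beta>: "\<beta> > 0" using assms(3) arg02pi_range[of x] by linarith
  have "real (k + 1) * \<beta> \<le> real w * \<beta>" using assms(4) \<beta> by (intro mult_right_mono) auto
  then have k: "real k * \<beta> + \<beta> \<le> 2 * pi" "\<beta> \<le> real k * \<beta>"
    using assms(1) \<open>k \<noteq> 0\<close> \<beta> by (simp_all add: distrib_right)
  then have "arg02pi (cis (real k * \<beta>) * x) = arg02pi x + real k * \<beta>"
    using cis_mult_arg02pi[OF assms(2), of "real k * \<beta>"] assms(3) \<beta> by auto
  then show False using assms(5) k(2) arg02pi_range[of x] by linarith
qed

lemma int_square_le_1: "(b::int) * b \<le> 1 \<Longrightarrow> b = -1 \<or> b = 0 \<or> b = 1"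
  using abs_square_le_1[of b] by (auto simp: power2_eq_square)

context imag_quad
begin

lemma unitO_coords_iff:
  "unitO d (of_int a + of_int b * omega d) \<longleftrightarrow> a * a + tr_omega d * a * b + nm_omega d * (b * b) = 1"
proof -
  let ?u = "of_int a + of_int b * omega d"
  have "complex_of_int (int (normO ?u)) = of_int (a * a + tr_omega d * a * b + nm_omega d * (b * b))"
    using of_nat_normO[OF OK_intro] times_cnj_coords by simp
  then have "a * a + tr_omega d * a * b + nm_omega d * (b * b) = int (normO ?u)"
    by (simp only: of_int_eq_iff)
  then show ?thesis by (simp add: unitO_iff_normO OK_intro)
qed

lemma unitO_iff_pm1:
  assumes "nm_omega d \<ge> 2"
  shows "unitO d u \<longleftrightarrow> u = 1 \<or> u = -1"
proof
  assume "unitO d u"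
  then obtain a b where ab: "u = of_int a + of_int b * omega d"
    using unitO_OK by (metis OK_iff)
  then have N: "a * a + tr_omega d * a * b + nm_omega d * (b * b) = 1"
    using \<open>unitO d u\<close> unitO_coords_iff by simp
  have "b = 0"
  proof (rule ccontr)
    assume "b \<noteq> 0"
    then have "1 \<le> b * b"
      by (metis int_one_le_iff_zero_less mult_eq_0_iff order_less_le zero_le_square)
    moreover have "7 \<le> 4 * nm_omega d - tr_omega d * tr_omega d"
      using assms by (simp add: tr_omega_def)
    ultimately have "7 * 1 \<le> (4 * nm_omega d - tr_omega d * tr_omega d) * (b * b)"
      by (intro mult_mono) auto
    moreover have "4 = (2 * a + tr_omega d * b) * (2 * a + tr_omega d * b) +
        (4 * nm_omega d - tr_omega d * tr_omega d) * (b * b)"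
      using N by (simp add: algebra_simps)
    moreover have "0 \<le> (2 * a + tr_omega d * b) * (2 * a + tr_omega d * b)" by simp
    ultimately show False by linarith
  qed
  then have "a = -1 \<or> a = 1" using N int_square_le_1[of a] by auto
  then show "u = 1 \<or> u = -1" using ab \<open>b = 0\<close> by auto
next
  assume "u = 1 \<or> u = -1"
  then show "unitO d u" using unitO_coords_iff[of 1 0] unitO_coords_iff[of "-1" 0] by auto
qed

lemma A_representative_unique_if_roots_of_unity:
  assumes w: "w \<ge> 1" "real w * \<beta> = 2 * pi"
    and sector: "(if d = -1 then pi / 2 else if d = -3 then pi / 3 else pi) = \<beta>"
    and units: "\<And>u. unitO d u \<longleftrightarrow> (\<exists>k<w. u = cis (real k * \<beta>))"
  shows "x \<in> OK d \<Longrightarrow> x \<noteq> 0 \<Longrightarrow> \<exists>u. unitO d u \<and> u * x \<in> A d"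
    and "x \<in> A d \<Longrightarrow> unitO d u \<Longrightarrow> u * x \<in> A d \<Longrightarrow> u = 1"
proof -
  have A: "y \<in> A d \<longleftrightarrow> y \<in> OK d \<and> y \<noteq> 0 \<and> arg02pi y < \<beta>" for y
    using arg02pi_range[of y] sector by (auto simp: A_def)
  show "\<exists>u. unitO d u \<and> u * x \<in> A d" if "x \<in> OK d" "x \<noteq> 0"
    using ex_cis_mult_arg02pi_less[OF w that(2)] units that A unitO_OK by fastforce
  show "u = 1" if "x \<in> A d" "unitO d u" "u * x \<in> A d"
    using that units cis_mult_arg02pi_less_unique[OF w(2)] A by fastforce
qed

end

lemma omega_neg1: "omega (-1) = \<i>"
  by (simp add: omega_def csqrt_int_def)

lemma omega_neg3: "omega (-3) = cis (pi / 3)"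
  by (simp add: omega_def csqrt_int_def complex_eq_iff cos_60 sin_60)

lemma ex_less_cis_mult_iff: "(\<exists>k<w. u = cis (real k * \<beta>)) \<longleftrightarrow> (\<exists>k<w. u = cis \<beta> ^ k)"
proof -
  have "cis \<beta> ^ k = cis (real k * \<beta>)" for k
    by (induction k) (auto simp: cis_mult algebra_simps)
  then show ?thesis by simp
qed

lemma ex_nat_less_4: "(\<exists>k<(4::nat). P k) \<longleftrightarrow> P 0 \<or> P 1 \<or> P 2 \<or> P 3"
  by (auto simp: eval_nat_numeral less_Suc_eq)

lemma ex_nat_less_6: "(\<exists>k<(6::nat). P k) \<longleftrightarrow> P 0 \<or> P 1 \<or> P 2 \<or> P 3 \<or> P 4 \<or> P 5"
  by (auto simp: eval_nat_numeral less_Suc_eq)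

lemma unitO_neg1_iff: "unitO (-1) u \<longleftrightarrow> (\<exists>k<4. u = cis (real k * (pi / 2)))"
proof -
  interpret imag_quad "-1" by unfold_locales simp
  have coords: "unitO (-1) (of_int a + of_int b * \<i>) \<longleftrightarrow> a * a + b * b = 1" for a b
    using unitO_coords_iff[of a b] by (simp add: omega_neg1 tr_omega_def nm_omega_def)
  have "unitO (-1) u \<longleftrightarrow> u = 1 \<or> u = \<i> \<or> u = -1 \<or> u = - \<i>"
  proof
    assume u: "unitO (-1) u"
    then obtain a b where ab: "u = of_int a + of_int b * \<i>"
      using unitO_OK[OF u] by (auto simp: OK_iff omega_neg1)
    then have "a * a + b * b = 1" using u coords by simp
    then have "a * a \<le> 1" "b * b \<le> 1" using zero_le_square[of a] zero_le_square[of b] by linarith+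
    then have "a = -1 \<or> a = 0 \<or> a = 1" "b = -1 \<or> b = 0 \<or> b = 1"
      using int_square_le_1 by blast+
    then show "u = 1 \<or> u = \<i> \<or> u = -1 \<or> u = - \<i>"
      using ab \<open>a * a + b * b = 1\<close> by auto
  next
    assume "u = 1 \<or> u = \<i> \<or> u = -1 \<or> u = - \<i>"
    then show "unitO (-1) u"
      using coords[of 1 0] coords[of 0 1] coords[of "-1" 0] coords[of 0 "-1"] by auto
  qed
  moreover have "(\<exists>k<4. u = cis (real k * (pi / 2))) \<longleftrightarrow> u = 1 \<or> u = \<i> \<or> u = -1 \<or> u = - \<i>"
    unfolding ex_less_cis_mult_iff ex_nat_less_4 by (simp add: power3_eq_cube)
  ultimately show ?thesis by simp
qed

lemma unitO_neg3_iff: "unitO (-3) u \<longleftrightarrow> (\<exists>k<6. u = cis (real k * (pi / 3)))"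
proof -
  interpret imag_quad "-3" by unfold_locales simp
  let ?w = "omega (-3)"
  have coords: "unitO (-3) (of_int a + of_int b * ?w) \<longleftrightarrow> a * a + a * b + b * b = 1" for a b
    using unitO_coords_iff[of a b] by (simp add: tr_omega_def nm_omega_def)
  have w2: "?w ^ 2 = ?w - 1"
    using omega_squared by (simp add: power2_eq_square tr_omega_def nm_omega_def)
  have p: "?w ^ 3 = ?w ^ 2 * ?w" "?w ^ 4 = ?w ^ 3 * ?w" "?w ^ 5 = ?w ^ 4 * ?w"
    by (simp_all add: eval_nat_numeral)
  have w3: "?w ^ 3 = -1"
  proof -
    have "?w ^ 3 = (?w - 1) * ?w" using p(1) w2 by simp
    also have "\<dots> = ?w ^ 2 - ?w" by (simp add: algebra_simps power2_eq_square)
    finally show ?thesis using w2 by simp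
  qed
  have w4: "?w ^ 4 = - ?w" using p(2) w3 by simp
  have w5: "?w ^ 5 = 1 - ?w" using p(3) w4 w2 by (simp add: power2_eq_square)
  have "unitO (-3) u \<longleftrightarrow> u = 1 \<or> u = ?w \<or> u = ?w - 1 \<or> u = -1 \<or> u = - ?w \<or> u = 1 - ?w"
  proof
    assume u: "unitO (-3) u"
    then obtain a b where ab: "u = of_int a + of_int b * ?w" using unitO_OK by (metis OK_iff)
    then have e: "a * a + a * b + b * b = 1" using u coords by simp
    then have "(2 * a + b) * (2 * a + b) + 3 * (b * b) = 4" "(2 * b + a) * (2 * b + a) + 3 * (a * a) = 4"
      by (simp_all add: algebra_simps)
    then have "a * a \<le> 1" "b * b \<le> 1"
      using zero_le_square[of "2 * a + b"] zero_le_square[of "2 * b + a"] by linarith+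
    then have "a = -1 \<or> a = 0 \<or> a = 1" "b = -1 \<or> b = 0 \<or> b = 1"
      using int_square_le_1 by blast+
    then show "u = 1 \<or> u = ?w \<or> u = ?w - 1 \<or> u = -1 \<or> u = - ?w \<or> u = 1 - ?w"
      using ab e by (auto simp: algebra_simps)
  next
    assume u: "u = 1 \<or> u = ?w \<or> u = ?w - 1 \<or> u = -1 \<or> u = - ?w \<or> u = 1 - ?w"
    have "unitO (-3) 1" "unitO (-3) ?w" "unitO (-3) (?w - 1)" "unitO (-3) (-1)"
      "unitO (-3) (- ?w)" "unitO (-3) (1 - ?w)"
      using coords[of 1 0] coords[of 0 1] coords[of "-1" 1] coords[of "-1" 0] coords[of 0 "-1"]
        coords[of 1 "-1"] by (simp_all add: algebra_simps)
    then show "unitO (-3) u" using u by blast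
  qed
  moreover have "(\<exists>k<6. u = cis (real k * (pi / 3))) \<longleftrightarrow>
      u = 1 \<or> u = ?w \<or> u = ?w - 1 \<or> u = -1 \<or> u = - ?w \<or> u = 1 - ?w"
    unfolding ex_less_cis_mult_iff ex_nat_less_6 omega_neg3[symmetric] using w2 w3 w4 w5 by auto
  ultimately show ?thesis by simp
qed

section \<open>Class number one via the Dedekind--Hasse criterion\<close>

definition inert :: "int \<Rightarrow> nat \<Rightarrow> bool" where
  "inert d p \<longleftrightarrow> (\<forall>a b. \<not> (int p dvd a \<and> int p dvd b) \<longrightarrow>
     \<not> int p dvd (a * a + tr_omega d * a * b + nm_omega d * (b * b)))"

context imag_quad
begin

lemma dedekind_hasse_bezout:
  assumes DH: "\<And>x g. x \<in> OK d \<Longrightarrow> g \<in> OK d \<Longrightarrow> g \<noteq> 0 \<Longrightarrow> \<not> dvdO d g x \<Longrightarrow>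
       \<exists>s\<in>OK d. \<exists>\<gamma>\<in>OK d. 0 < cmod (s * x - \<gamma> * g) \<and> cmod (s * x - \<gamma> * g) < cmod g"
    and xy: "x \<in> OK d" "y \<in> OK d"
  shows "\<exists>g\<in>OK d. dvdO d g x \<and> dvdO d g y \<and> (\<exists>u\<in>OK d. \<exists>v\<in>OK d. g = u * x + v * y)"
proof (cases "x = 0 \<and> y = 0")
  case True
  moreover have "(0::complex) = 0 * x + 0 * y" by simp
  ultimately show ?thesis using dvdO_0[OF OK_0] OK_0 by blast
next
  case False
  define I where "I h \<longleftrightarrow> (\<exists>u\<in>OK d. \<exists>v\<in>OK d. h = u * x + v * y)" for h
  have "I x" "I y" unfolding I_def by (metis OK_0 OK_1 add_0 add.right_neutral mult_1 mult_zero_left)+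
  then obtain h0 where "h0 \<noteq> 0" "I h0" using False by blast
  then obtain g where g: "g \<noteq> 0" "I g" "\<And>h. h \<noteq> 0 \<Longrightarrow> I h \<Longrightarrow> normO g \<le> normO h"
    using ex_has_least_nat[of "\<lambda>h. h \<noteq> 0 \<and> I h" h0 normO] by blast
  obtain ug vg where ugv: "ug \<in> OK d" "vg \<in> OK d" "g = ug * x + vg * y" using g(2) unfolding I_def by blast
  have gO: "g \<in> OK d" using ugv xy by simp
  have "dvdO d g t" if t: "I t" for t
  proof (rule ccontr)
    assume nd: "\<not> dvdO d g t"
    obtain ut vt where utv: "ut \<in> OK d" "vt \<in> OK d" "t = ut * x + vt * y" using t unfolding I_def by blast
    obtain s \<gamma> where s\<gamma>: "s \<in> OK d" "\<gamma> \<in> OK d" "0 < cmod (s * t - \<gamma> * g)" "cmod (s * t - \<gamma> * g) < cmod g"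
      using DH[OF _ gO g(1) nd] utv xy by auto
    define r where "r = s * t - \<gamma> * g"
    have "r = (s * ut - \<gamma> * ug) * x + (s * vt - \<gamma> * vg) * y"
      unfolding r_def utv(3) ugv(3) by (simp add: algebra_simps)
    then have "I r" unfolding I_def using s\<gamma> utv ugv by blast
    moreover have "r \<noteq> 0" using s\<gamma>(3) r_def by auto
    ultimately have "normO g \<le> normO r" using g(3) by blast
    moreover have "r \<in> OK d" unfolding r_def using s\<gamma> utv xy gO by simp
    then have "real (normO r) < real (normO g)"
      using s\<gamma>(3,4) r_def real_normO gO by (simp add: power_strict_mono)
    ultimately show False by simp
  qed
  then show ?thesis using \<open>I x\<close> \<open>I y\<close> gO ugv by blast
qed

lemma ex_OK_near:
  assumes "\<bar>real k * (Im q / Im (omega d)) - of_int b\<bar> \<le> \<delta>"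
  shows "\<exists>a::int. (cmod (of_nat k * q - (of_int a + of_int b * omega d)))\<^sup>2 \<le> 1 / 4 + (\<delta> * Im (omega d))\<^sup>2"
proof -
  define z where "z = of_nat k * q - of_int b * omega d"
  define a where "a = \<lfloor>Re z + 1 / 2\<rfloor>"
  have "Im z = (real k * (Im q / Im (omega d)) - of_int b) * Im (omega d)"
    unfolding z_def using Im_omega_pos by (simp add: field_simps)
  then have "\<bar>Im z\<bar> \<le> \<delta> * Im (omega d)"
    using assms Im_omega_pos by (simp add: abs_mult mult_right_mono)
  then have "(Im z)\<^sup>2 \<le> (\<delta> * Im (omega d))\<^sup>2" by (metis abs_ge_zero power2_abs power_mono)
  moreover have "\<bar>Re z - of_int a\<bar> \<le> 1 / 2" unfolding a_def by linarith
  then have "(Re z - of_int a)\<^sup>2 \<le> (1 / 2)\<^sup>2" by (metis abs_ge_zero power2_abs power_mono)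
  then have "(Re z - of_int a)\<^sup>2 \<le> 1 / 4" by (simp add: power_divide)
  moreover have "(cmod (of_nat k * q - (of_int a + of_int b * omega d)))\<^sup>2 = (Re z - of_int a)\<^sup>2 + (Im z)\<^sup>2"
    unfolding z_def by (simp add: cmod_power2 algebra_simps)
  ultimately show ?thesis by (intro exI[of _ a]) linarith
qed

text \<open>A prime \<open>p\<close> is inert when \<open>p\<close> divides no norm \<open>a\<^sup>2 + t a b + n b\<^sup>2\<close> except for \<open>p | a, b\<close>;
  then every \<open>\<beta>\<close> not divisible by \<open>p\<close> is invertible modulo \<open>p\<close> (multiply by a multiple of \<open>\<beta>\<close>'s conjugate).\<close>

lemma inert_invertible_mod:
  assumes "prime p" "inert d p" "\<beta> \<in> OK d" "\<beta> / of_nat p \<notin> OK d"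
  shows "\<exists>\<beta>'\<in>OK d. \<exists>\<mu>\<in>OK d. \<beta> * \<beta>' = 1 + of_nat p * \<mu>"
proof -
  obtain a b where ab: "\<beta> = of_int a + of_int b * omega d" using assms(3) by (auto simp: OK_iff)
  define N where "N = a * a + tr_omega d * a * b + nm_omega d * (b * b)"
  have "\<not> (int p dvd a \<and> int p dvd b)"
  proof
    assume "int p dvd a \<and> int p dvd b"
    then obtain a' b' where "a = int p * a'" "b = int p * b'" by (auto elim!: dvdE)
    then have "\<beta> / of_nat p = of_int a' + of_int b' * omega d"
      using ab prime_gt_0_nat[OF assms(1)] by (simp add: field_simps)
    then show False using assms(4) OK_intro by simp
  qed
  then have "\<not> int p dvd N" using assms(2) unfolding inert_def N_def by blast
  moreover have "prime (int p)" using assms(1) by simp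
  ultimately have "coprime (int p) N" using prime_imp_coprime by blast
  then obtain u v where uv: "u * N + v * int p = 1"
    by (metis bezout_int coprime_iff_gcd_eq_1 gcd.commute)
  have "\<beta> * cnj \<beta> = of_int N" unfolding ab N_def by (rule times_cnj_coords)
  then have "\<beta> * (of_int u * cnj \<beta>) = of_int (u * N)"
    by (metis mult.left_commute of_int_mult)
  also have "u * N = 1 + int p * (- v)" using uv by (simp add: algebra_simps)
  finally show ?thesis using assms(3) by (intro bexI[of _ "of_int u * cnj \<beta>"] bexI[of _ "of_int (- v)"]) auto
qed

text \<open>Dedekind--Hasse: for \<open>q = x/g \<notin> O\<close>, a small multiple \<open>k q\<close> is close to some \<open>\<gamma> \<in> O\<close>. If
  \<open>k q \<noteq> \<gamma>\<close> then \<open>k x - \<gamma> g\<close> is shorter than \<open>g\<close>. Otherwise take the least \<open>k\<^sub>0\<close> with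
  \<open>k\<^sub>0 q \<in> O\<close> and a prime \<open>p | k\<^sub>0\<close>; inertness of \<open>p\<close> yields \<open>s\<close> with \<open>s x - \<mu> g = g / p\<close>.\<close>

lemma dedekind_hasse:
  assumes approx: "\<And>Y::real. \<exists>k::nat. 1 \<le> k \<and> k \<le> K \<and> (\<exists>b::int. \<bar>real k * Y - of_int b\<bar> \<le> \<delta>)"
    and small: "1 / 4 + (\<delta> * Im (omega d))\<^sup>2 < 1"
    and small_primes_inert: "\<And>p. prime p \<Longrightarrow> p \<le> K \<Longrightarrow> inert d p"
    and x: "x \<in> OK d" "g \<in> OK d" "g \<noteq> 0" "\<not> dvdO d g x"
  shows "\<exists>s\<in>OK d. \<exists>\<gamma>\<in>OK d. 0 < cmod (s * x - \<gamma> * g) \<and> cmod (s * x - \<gamma> * g) < cmod g"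
proof -
  define q where "q = x / g"
  have qO: "q \<notin> OK d" using dvdO_iff_divide_OK[OF x(2,3)] x(4) q_def by simp
  have xq: "x = g * q" using x(3) q_def by simp
  obtain k b where kb: "1 \<le> k" "k \<le> K" "\<bar>real k * (Im q / Im (omega d)) - of_int b\<bar> \<le> \<delta>"
    using approx by blast
  obtain a where a: "(cmod (of_nat k * q - (of_int a + of_int b * omega d)))\<^sup>2 \<le> 1 / 4 + (\<delta> * Im (omega d))\<^sup>2"
    using ex_OK_near[OF kb(3)] by blast
  define \<gamma> where "\<gamma> = of_int a + of_int b * omega d"
  have "(cmod (of_nat k * q - \<gamma>))\<^sup>2 < 1" using a small \<gamma>_def by simp
  then have lt1: "cmod (of_nat k * q - \<gamma>) < 1" by (simp add: power_less_one_iff)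
  have cg: "cmod g > 0" using x(3) by simp
  show ?thesis
  proof (cases "of_nat k * q = \<gamma>")
    case False
    have e: "cmod (of_nat k * x - \<gamma> * g) = cmod g * cmod (of_nat k * q - \<gamma>)"
      unfolding xq by (simp add: norm_mult[symmetric] algebra_simps)
    have "0 < cmod (of_nat k * q - \<gamma>)" using False by simp
    then have "0 < cmod (of_nat k * x - \<gamma> * g) \<and> cmod (of_nat k * x - \<gamma> * g) < cmod g"
      unfolding e using lt1 cg by simp
    moreover have "\<gamma> \<in> OK d" unfolding \<gamma>_def by (rule OK_intro)
    ultimately show ?thesis using OK_of_nat by blast
  next
    case True
    define k0 where "k0 = (LEAST j. 1 \<le> j \<and> of_nat j * q \<in> OK d)"
    have k0: "1 \<le> k0" "of_nat k0 * q \<in> OK d" "k0 \<le> k"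
      using LeastI[of "\<lambda>j. 1 \<le> j \<and> of_nat j * q \<in> OK d" k] Least_le[of _ k] kb True OK_intro
      unfolding k0_def \<gamma>_def by auto
    then have "k0 \<noteq> 1" using qO by auto
    then obtain p k' where p: "prime p" "k0 = p * k'" using prime_factor_nat by (metis dvdE)
    have "k' \<ge> 1" "p \<ge> 2" using k0(1) p prime_ge_2_nat by (auto intro: Nat.gr0I)
    then have "k' < k0" using p(2) by simp
    then have "of_nat k' * q \<notin> OK d"
      using not_less_Least[of k' "\<lambda>j. 1 \<le> j \<and> of_nat j * q \<in> OK d"] \<open>k' \<ge> 1\<close> unfolding k0_def by blast
    moreover have "of_nat k0 * q / of_nat p = of_nat k' * q" using p \<open>p \<ge> 2\<close> by simp
    moreover have "p \<le> K" using p k0 kb(2) by (metis dvd_triv_left dvd_imp_le le_trans not_one_le_zero neq0_conv)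
    ultimately obtain \<beta>' \<mu> where bm: "\<beta>' \<in> OK d" "\<mu> \<in> OK d" "of_nat k0 * q * \<beta>' = 1 + of_nat p * \<mu>"
      using inert_invertible_mod[OF p(1) small_primes_inert[OF p(1)] k0(2)] by auto
    define s where "s = of_nat k' * \<beta>'"
    have "of_nat p * (s * q) = 1 + of_nat p * \<mu>" using bm(3) unfolding s_def p(2) by (simp add: algebra_simps)
    then have "s * q - \<mu> = 1 / of_nat p" using \<open>p \<ge> 2\<close> by (simp add: field_simps)
    then have "s * x - \<mu> * g = g / of_nat p" unfolding xq by (simp add: algebra_simps)
    then have "cmod (s * x - \<mu> * g) = cmod g / real p" by (simp add: norm_divide)
    moreover have "cmod g / real p < cmod g" "0 < cmod g / real p" using cg \<open>p \<ge> 2\<close> by (simp_all add: divide_less_eq)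
    moreover have "s \<in> OK d" unfolding s_def using bm by simp
    ultimately show ?thesis using bm by metis
  qed
qed

end

lemma ex_approx_round: "\<exists>k::nat. 1 \<le> k \<and> k \<le> 1 \<and> (\<exists>b::int. \<bar>real k * Y - of_int b\<bar> \<le> 1 / 2)"
proof -
  have "\<bar>real 1 * Y - of_int \<lfloor>Y + 1 / 2\<rfloor>\<bar> \<le> 1 / 2" by linarith
  then show ?thesis by blast
qed

lemma ex_approx_dirichlet:
  assumes "K \<ge> 1"
  shows "\<exists>k::nat. 1 \<le> k \<and> k \<le> K \<and> (\<exists>b::int. \<bar>real k * Y - of_int b\<bar> \<le> 1 / real K)"
proof -
  obtain q :: int and p :: "nat \<Rightarrow> int" where qp: "0 < q" "q \<le> int (K ^ 1)"
    "\<bar>of_int q * Y - of_int (p 0)\<bar> < 1 / real K"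
    using Dirichlet_approx_simult[where \<theta>="\<lambda>_. Y" and N=K and n=1] assms by auto
  then have "1 \<le> nat q" "nat q \<le> K" "\<bar>real (nat q) * Y - of_int (p 0)\<bar> \<le> 1 / real K" by auto
  then show ?thesis by blast
qed

lemma inert_if_residues:
  fixes p t c :: int
  assumes "p > 0" "\<forall>i\<in>{0..<p}. \<forall>j\<in>{0..<p}. (i \<noteq> 0 \<or> j \<noteq> 0) \<longrightarrow> (i * i + t * i * j + c * (j * j)) mod p \<noteq> 0"
  shows "\<forall>a b. \<not> (p dvd a \<and> p dvd b) \<longrightarrow> \<not> p dvd (a * a + t * a * b + c * (b * b))"
proof (intro allI impI notI)
  fix a b assume nd: "\<not> (p dvd a \<and> p dvd b)" and dv: "p dvd (a * a + t * a * b + c * (b * b))"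
  define i where "i = a mod p"
  define j where "j = b mod p"
  define A where "A = a div p"
  define B where "B = b div p"
  have a: "a = p * A + i" and b: "b = p * B + j" unfolding i_def j_def A_def B_def by simp_all
  have "a * a + t * a * b + c * (b * b) = (i * i + t * i * j + c * (j * j)) +
      (p * A * A + 2 * A * i + t * (p * A * B + A * j + i * B) + c * (p * B * B + 2 * B * j)) * p"
    unfolding a b by (simp add: algebra_simps)
  then have "(i * i + t * i * j + c * (j * j)) mod p = 0" using dv by (simp add: dvd_eq_mod_eq_0)
  moreover have "i \<in> {0..<p}" "j \<in> {0..<p}" using assms(1) unfolding i_def j_def by simp_all
  then have "(i \<noteq> 0 \<or> j \<noteq> 0) \<longrightarrow> (i * i + t * i * j + c * (j * j)) mod p \<noteq> 0"
    using assms(2) by (metis bspec)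
  moreover have "i \<noteq> 0 \<or> j \<noteq> 0"
  proof (rule ccontr)
    assume "\<not> (i \<noteq> 0 \<or> j \<noteq> 0)"
    then have "a mod p = 0" "b mod p = 0" unfolding i_def j_def by blast+
    then show False using nd mod_0_imp_dvd by blast
  qed
  ultimately show False by metis
qed

lemma imag_quad_normal_if_dedekind_hasse:
  assumes "d < 0"
    and approx: "\<And>Y::real. \<exists>k::nat. 1 \<le> k \<and> k \<le> K \<and> (\<exists>b::int. \<bar>real k * Y - of_int b\<bar> \<le> \<delta>)"
    and small: "1 / 4 + (\<delta> * Im (omega d))\<^sup>2 < 1"
    and inert: "\<And>p. prime p \<Longrightarrow> p \<le> K \<Longrightarrow> inert d p"
    and rep: "\<And>x. x \<in> OK d \<Longrightarrow> x \<noteq> 0 \<Longrightarrow> \<exists>u. unitO d u \<and> u * x \<in> A d"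
    and unique: "\<And>x u. x \<in> A d \<Longrightarrow> unitO d u \<Longrightarrow> u * x \<in> A d \<Longrightarrow> u = 1"
  shows "imag_quad_normal d"
proof -
  interpret imag_quad d using assms(1) by unfold_locales
  interpret imag_quad_bezout d
    by unfold_locales (rule dedekind_hasse_bezout[OF dedekind_hasse[OF approx small inert]])
  show ?thesis using rep unique by unfold_locales
qed

lemma imag_quad_normal_if_units_pm1:
  assumes "d < 0" "d \<noteq> -1" "d \<noteq> -3" "nm_omega d \<ge> 2"
    and approx: "\<And>Y::real. \<exists>k::nat. 1 \<le> k \<and> k \<le> K \<and> (\<exists>b::int. \<bar>real k * Y - of_int b\<bar> \<le> \<delta>)"
    and small: "1 / 4 + (\<delta> * Im (omega d))\<^sup>2 < 1"
    and inert: "\<And>p. prime p \<Longrightarrow> p \<le> K \<Longrightarrow> inert d p"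
  shows "imag_quad_normal d"
proof -
  interpret imag_quad d using assms(1) by unfold_locales
  have "(\<exists>k<2. u = cis (real k * pi)) \<longleftrightarrow> u = 1 \<or> u = -1" for u
    by (auto simp: less_2_cases_iff)
  then have "unitO d u \<longleftrightarrow> (\<exists>k<2. u = cis (real k * pi))" for u
    using unitO_iff_pm1[OF assms(4)] by simp
  note AR = A_representative_unique_if_roots_of_unity[of 2 pi, OF _ _ _ this]
  show ?thesis
    using assms(2,3) AR by (intro imag_quad_normal_if_dedekind_hasse[OF assms(1) approx small inert]) auto
qed

lemma prime_le_1_False: "prime (p::nat) \<Longrightarrow> p \<le> 1 \<Longrightarrow> False"
  using prime_ge_2_nat[of p] by simp

lemma prime_le_8_cases: "prime (p::nat) \<Longrightarrow> p \<le> 8 \<Longrightarrow> p = 2 \<or> p = 3 \<or> p = 5 \<or> p = 7"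
proof -
  assume p: "prime p" "p \<le> 8"
  then have "p \<in> {2, 3, 4, 5, 6, 7, 8}" using prime_ge_2_nat[of p] by auto
  moreover have "\<not> prime (4::nat)" "\<not> prime (6::nat)" "\<not> prime (8::nat)"
    by (auto simp: prime_nat_iff intro!: exI[of _ 2])
  ultimately show ?thesis using p by auto
qed

lemma Im_omega_neg: "d < 0 \<Longrightarrow> Im (omega d) = (if d mod 4 = 1 then sqrt (- d) / 2 else sqrt (- d))"
  using imag_quad.Im_omega[of d] by (simp add: imag_quad_def)

text \<open>For \<open>d = -1, -2, -3, -7, -11\<close> the ring is norm-Euclidean (\<open>K = 1\<close>, rounding). For the remaining
  four discriminants the approximation needs multipliers up to \<open>K\<close>, and all primes \<open>p \<le> K\<close>
  must be inert; the residue tables of the norm form modulo \<open>p\<close> confirm this.\<close>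

lemma imag_quad_normal_class_number_one:
  assumes "d \<in> {-163, -67, -43, -19, -11, -7, -3, -2, -1}"
  shows "imag_quad_normal d"
proof -
  have r2: "{0..<2::int} = {0, 1}" and r3: "{0..<3::int} = {0, 1, 2}"
    and r5: "{0..<5::int} = {0, 1, 2, 3, 4}" and r7: "{0..<7::int} = {0, 1, 2, 3, 4, 5, 6}"
    by auto
  have inert: "inert d p"
    if "\<forall>i\<in>{0..<int p}. \<forall>j\<in>{0..<int p}. (i \<noteq> 0 \<or> j \<noteq> 0) \<longrightarrow>
        (i * i + tr_omega d * i * j + nm_omega d * (j * j)) mod p \<noteq> 0" "p > 0" for d p
    unfolding inert_def by (rule inert_if_residues) (use that in simp_all)
  note round = ex_approx_round and dir = ex_approx_dirichlet
  have "imag_quad_normal (-1)"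
  proof (rule imag_quad_normal_if_dedekind_hasse[OF _ round])
    interpret imag_quad "-1" by unfold_locales simp
    show "x \<in> OK (-1) \<Longrightarrow> x \<noteq> 0 \<Longrightarrow> \<exists>u. unitO (-1) u \<and> u * x \<in> A (-1)"
      "x \<in> A (-1) \<Longrightarrow> unitO (-1) u \<Longrightarrow> u * x \<in> A (-1) \<Longrightarrow> u = 1" for x u
      using A_representative_unique_if_roots_of_unity[of 4 "pi / 2"] unitO_neg1_iff by auto
  qed (auto simp: Im_omega_neg power_divide dest: prime_le_1_False)
  moreover have "imag_quad_normal (-3)"
  proof (rule imag_quad_normal_if_dedekind_hasse[OF _ round])
    interpret imag_quad "-3" by unfold_locales simp
    show "x \<in> OK (-3) \<Longrightarrow> x \<noteq> 0 \<Longrightarrow> \<exists>u. unitO (-3) u \<and> u * x \<in> A (-3)"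
      "x \<in> A (-3) \<Longrightarrow> unitO (-3) u \<Longrightarrow> u * x \<in> A (-3) \<Longrightarrow> u = 1" for x u
      using A_representative_unique_if_roots_of_unity[of 6 "pi / 3"] unitO_neg3_iff by auto
  qed (auto simp: Im_omega_neg power_divide dest: prime_le_1_False)
  moreover have "imag_quad_normal d" if "d \<in> {-2, -7, -11}"
    using that by (auto intro!: imag_quad_normal_if_units_pm1[OF _ _ _ _ round]
        simp: Im_omega_neg nm_omega_def power_divide dest: prime_le_1_False)
  moreover have "imag_quad_normal (-19)"
    by (rule imag_quad_normal_if_units_pm1[OF _ _ _ _ dir[of 3]])
      (auto simp: Im_omega_neg nm_omega_def tr_omega_def power_divide r2 r3
        dest!: prime_le_8_cases intro!: inert)
  moreover have "imag_quad_normal (-43)"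
    by (rule imag_quad_normal_if_units_pm1[OF _ _ _ _ dir[of 4]])
      (auto simp: Im_omega_neg nm_omega_def tr_omega_def power_divide r2 r3
        dest!: prime_le_8_cases intro!: inert)
  moreover have "imag_quad_normal (-67)"
    by (rule imag_quad_normal_if_units_pm1[OF _ _ _ _ dir[of 5]])
      (auto simp: Im_omega_neg nm_omega_def tr_omega_def power_divide r2 r3 r5
        dest!: prime_le_8_cases intro!: inert)
  moreover have "imag_quad_normal (-163)"
    by (rule imag_quad_normal_if_units_pm1[OF _ _ _ _ dir[of 8]])
      (auto simp: Im_omega_neg nm_omega_def tr_omega_def power_divide r2 r3 r5 r7
        dest!: prime_le_8_cases intro!: inert)
  ultimately show ?thesis using assms by auto
qed

theorem theorem2p2:
  fixes d :: int and z :: complex and n :: int and t :: nat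
  assumes "d \<in> {-163, -67, -43, -19, -11, -7, -3, -2, -1}"
    and "z \<in> OK d" and "z \<noteq> 0"
    and "n \<in> {1, 2}"
    and "t \<noteq> 1"
    and "I_star d n z = real t"
  shows "\<exists>k :: int. z * cnj z = of_int (2 * k)"
proof -
  interpret imag_quad_normal d using imag_quad_normal_class_number_one[OF assms(1)] .
  obtain ms where ms: "prod_list ms = normO z" "\<forall>m\<in>set ms. m \<ge> 2"
    "I_star d n z = prod_list (map (\<lambda>m. 1 + inverse (sqrt (real m) powi n)) ms)"
    using I_star_eq_prod_list[OF assms(2,3)] .
  have "even (normO z)"
  proof (rule ccontr)
    assume odd: "odd (normO z)"
    have "odd m \<and> m \<ge> 2" if "m \<in> set ms" for m
    proof -
      have "m dvd normO z" using prod_list_dvd[OF that] ms(1) by simp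
      then show ?thesis using odd dvd_trans ms(2) that by blast
    qed
    moreover have "ms \<noteq> []" using ms(3) assms(5,6) by auto
    ultimately show False
      using prod_list_one_plus_inverse_powi_odd_neq_nat[of ms n t] assms(4,6) ms(3) by simp
  qed
  then obtain k where "normO z = 2 * k" by blast
  then show ?thesis using of_nat_normO[OF assms(2)] by (intro exI[of _ "int k"]) simp
qed

end
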